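(* Let $\mathcal{Q}$ be an exponential family (sufficient statistic $\Gamma:\mathcal{X}\to\mathcal{H}$, log-partition $A$) and let $\pi=q^\pi_{\theta_\pi}$ satisfy the linearly extended recoverability condition (LERC) with respect to $\mathcal{Q}$, with linear operator $L_\pi:\mathcal{H}\to\mathcal{H}_\pi$. (i) Suppose $\operatorname{int}\operatorname{dom}A\neq\emptyset$, $\mathcal{Q}$ is minimal and steep, and $C\subset\mathcal{H}$ is closed and convex with $C\cap\operatorname{int}\operatorname{dom}A^*\neq\emptyset$. If $C$ is compact, then the problem $\min_{\omega\in C\cap\operatorname{dom}A^*}f^D_\pi(\omega)$ has a unique solution $\omega_*$, and $\omega_*\in C\cap\operatorname{int}\operatorname{dom}A^*$. Alternatively, if $L_\pi^\top\theta_\pi\in\operatorname{int}\operatorname{dom}A$, then the same conclusion holds and moreover $\omega_*=\mathrm{proj}^{A^*}_C(\nabla A(L_\pi^\top\theta_\pi))$. (ii) If $\operatorname{int}\operatorname{dom}A\neq\emptyset$ and $\mathcal{Q}$ is minimal and steep, then $f^D_\pi$ is $1$-strongly convex and $1$-smooth relative to $A^*$, i.e. $d_{f^D_\pi}(\omega,\omega')=d_{A^*}(\omega,\omega')$ bounds hold with constant $1$ on both sides for all $\omega,\omega'\in\operatorname{int}\operatorname{dom}A^*$.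
   Context: An exponential family with sufficient statistic $\Gamma:\mathcal{X}\to\mathcal{H}$ ($\mathcal{H}$ finite-dimensional real Hilbert, $\nu$ a reference measure) consists of densities $q_\theta(x)=\exp(\langle\theta,\Gamma(x)\rangle-A(\theta))$, $\theta\in\operatorname{dom}A$, with $A(\theta)=\log\int\exp(\langle\theta,\Gamma(x)\rangle)\nu(dx)$. Minimal: no nonzero $\theta$ with $\langle\theta,\Gamma\rangle$ constant $\nu$-a.e. Steep: $A$ differentiable on $\operatorname{int}\operatorname{dom}A$ with $\|\nabla A(\theta_t)\|\to\infty$ along sequences in $\operatorname{int}\operatorname{dom}A$ tending to the boundary of $\operatorname{dom}A$. $A^*$ is the convex conjugate of $A$; $\nabla A$ is a bijection from $\operatorname{int}\operatorname{dom}A$ onto $\operatorname{int}\operatorname{dom}A^*$ with inverse $\nabla A^*$; $q_\omega$ denotes the member of $\mathcal{Q}$ with expectation parameter $\omega=\mathbb{E}_{q_\omega}[\Gamma(X)]$. $f^D_\pi(\omega)=\mathrm{KL}(q_\omega,\pi)$ for $\omega\in\operatorname{dom}A^*$. LERC: $\pi$ belongs to an exponential family $\mathcal{Q}_\pi$ with sufficient statistic $\Gamma_\pi:\mathcal{X}\to\mathcal{H}_\pi$ and natural parameter $\theta_\pi$, and there is a linear $L_\pi:\mathcal{H}\to\mathcal{H}_\pi$ with $\mathbb{E}_{q_\omega}[\Gamma_\pi(X)]=L_\pi\mathbb{E}_{q_\omega}[\Gamma(X)]$ for all $\omega\in\operatorname{dom}A^*$. Bregman divergence $d_h(\omega,\omega')=h(\omega)-h(\omega')-\langle\nabla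 h(\omega'),\omega-\omega'\rangle$; $f$ is $m$-strongly convex (resp. $\ell$-smooth) relative to $h$ if $m\,d_h\le d_f$ (resp. $d_f\le\ell\, d_h$). $\mathrm{proj}^{A^*}_C(\omega)=\arg\min_{\omega'\in C}d_{A^*}(\omega',\omega)$. *)

theory Defs
  imports "HOL-Analysis.Analysis"
begin

definition partition :: "'x measure \<Rightarrow> ('x \<Rightarrow> 'h::real_inner) \<Rightarrow> 'h \<Rightarrow> ennreal" where
  "partition \<nu> \<Gamma> \<theta> = (\<integral>\<^sup>+ x. ennreal (exp (\<theta> \<bullet> \<Gamma> x)) \<partial>\<nu>)"

definition domA :: "'x measure \<Rightarrow> ('x \<Rightarrow> 'h::real_inner) \<Rightarrow> 'h set" where
  "domA \<nu> \<Gamma> = {\<theta>. partition \<nu> \<Gamma> \<theta> < \<infinity>}"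

text \<open>Log-partition function A (real valued; meaningful on dom A).\<close>
definition logpart :: "'x measure \<Rightarrow> ('x \<Rightarrow> 'h::real_inner) \<Rightarrow> 'h \<Rightarrow> real" where
  "logpart \<nu> \<Gamma> \<theta> = ln (enn2real (partition \<nu> \<Gamma> \<theta>))"

definition expdens :: "'x measure \<Rightarrow> ('x \<Rightarrow> 'h::real_inner) \<Rightarrow> 'h \<Rightarrow> 'x \<Rightarrow> real" where
  "expdens \<nu> \<Gamma> \<theta> x = exp (\<theta> \<bullet> \<Gamma> x - logpart \<nu> \<Gamma> \<theta>)"

text \<open>Convex conjugate A* of A (A is +infinity outside dom A), extended-real valued.\<close>
definition conjA :: "'x measure \<Rightarrow> ('x \<Rightarrow> 'h::real_inner) \<Rightarrow> 'h \<Rightarrow> ereal" where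
  "conjA \<nu> \<Gamma> \<omega> = (SUP \<theta>\<in>domA \<nu> \<Gamma>. ereal (\<theta> \<bullet> \<omega> - logpart \<nu> \<Gamma> \<theta>))"

definition domAstar :: "'x measure \<Rightarrow> ('x \<Rightarrow> 'h::real_inner) \<Rightarrow> 'h set" where
  "domAstar \<nu> \<Gamma> = {\<omega>. conjA \<nu> \<Gamma> \<omega> < \<infinity>}"

text \<open>Real-valued version of A* (used on int dom A*, where A* is finite).\<close>
definition conjA_r :: "'x measure \<Rightarrow> ('x \<Rightarrow> 'h::real_inner) \<Rightarrow> 'h \<Rightarrow> real" where
  "conjA_r \<nu> \<Gamma> \<omega> = real_of_ereal (conjA \<nu> \<Gamma> \<omega>)"

definition gradient :: "('h::real_inner \<Rightarrow> real) \<Rightarrow> 'h \<Rightarrow> 'h" where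
  "gradient f x = (SOME g. (f has_derivative (\<lambda>v. g \<bullet> v)) (at x))"

definition minimal :: "'x measure \<Rightarrow> ('x \<Rightarrow> 'h::real_inner) \<Rightarrow> bool" where
  "minimal \<nu> \<Gamma> \<longleftrightarrow> \<not> (\<exists>\<theta> c. \<theta> \<noteq> 0 \<and> (AE x in \<nu>. \<theta> \<bullet> \<Gamma> x = c))"

definition steep :: "'x measure \<Rightarrow> ('x \<Rightarrow> 'h::real_inner) \<Rightarrow> bool" where
  "steep \<nu> \<Gamma> \<longleftrightarrow>
     (\<forall>\<theta>\<in>interior (domA \<nu> \<Gamma>). logpart \<nu> \<Gamma> differentiable (at \<theta>)) \<and>
     (\<forall>\<theta>s \<theta>0. (\<forall>t. \<theta>s t \<in> interior (domA \<nu> \<Gamma>)) \<longrightarrow> \<theta>s \<longlonglongrightarrow> \<theta>0 \<longrightarrow>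
        \<theta>0 \<in> frontier (domA \<nu> \<Gamma>) \<longrightarrow>
        filterlim (\<lambda>t. norm (gradient (logpart \<nu> \<Gamma>) (\<theta>s t))) at_top sequentially)"

definition has_mean :: "'x measure \<Rightarrow> ('x \<Rightarrow> 'h::euclidean_space) \<Rightarrow> 'h \<Rightarrow> 'h \<Rightarrow> bool" where
  "has_mean \<nu> \<Gamma> \<theta> \<omega> \<longleftrightarrow> \<theta> \<in> domA \<nu> \<Gamma> \<and>
     integrable \<nu> (\<lambda>x. expdens \<nu> \<Gamma> \<theta> x *\<^sub>R \<Gamma> x) \<and>
     (\<integral>x. expdens \<nu> \<Gamma> \<theta> x *\<^sub>R \<Gamma> x \<partial>\<nu>) = \<omega>"

definition qmean :: "'x measure \<Rightarrow> ('x \<Rightarrow> 'h::euclidean_space) \<Rightarrow> 'h \<Rightarrow> 'x \<Rightarrow> real" where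
  "qmean \<nu> \<Gamma> \<omega> = expdens \<nu> \<Gamma> (SOME \<theta>. has_mean \<nu> \<Gamma> \<theta> \<omega>)"

text \<open>KL(q, p) = integral of q log(q/p) d nu (for densities w.r.t. nu); +infinity if
  the integrand is not integrable (its negative part is always integrable for
  probability densities, so non-integrability means the integral is +infinity).\<close>
definition KL :: "'x measure \<Rightarrow> ('x \<Rightarrow> real) \<Rightarrow> ('x \<Rightarrow> real) \<Rightarrow> ereal" where
  "KL \<nu> q p = (if integrable \<nu> (\<lambda>x. q x * ln (q x / p x))
                then ereal (\<integral>x. q x * ln (q x / p x) \<partial>\<nu>) else \<infinity>)"

definition fD :: "'x measure \<Rightarrow> ('x \<Rightarrow> 'h::euclidean_space) \<Rightarrow> ('x \<Rightarrow> real) \<Rightarrow> 'h \<Rightarrow> ereal" where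
  "fD \<nu> \<Gamma> \<pi> \<omega> = (if \<exists>\<theta>. has_mean \<nu> \<Gamma> \<theta> \<omega> then KL \<nu> (qmean \<nu> \<Gamma> \<omega>) \<pi> else \<infinity>)"

definition fD_r :: "'x measure \<Rightarrow> ('x \<Rightarrow> 'h::euclidean_space) \<Rightarrow> ('x \<Rightarrow> real) \<Rightarrow> 'h \<Rightarrow> real" where
  "fD_r \<nu> \<Gamma> \<pi> \<omega> = real_of_ereal (fD \<nu> \<Gamma> \<pi> \<omega>)"

text \<open>LERC: pi = q^pi_{theta_pi} lies in the exponential family with statistic Gamma_pi,
  and E_{q_omega}[Gamma_pi] = L_pi E_{q_omega}[Gamma] for every member q_omega of Q.\<close>
definition LERC :: "'x measure \<Rightarrow> ('x \<Rightarrow> 'h::euclidean_space) \<Rightarrow> ('x \<Rightarrow> 'k::euclidean_space)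
     \<Rightarrow> 'k \<Rightarrow> ('h \<Rightarrow> 'k) \<Rightarrow> bool" where
  "LERC \<nu> \<Gamma> \<Gamma>\<pi> \<theta>\<pi> L \<longleftrightarrow> \<theta>\<pi> \<in> domA \<nu> \<Gamma>\<pi> \<and> linear L \<and>
     (\<forall>\<theta> \<omega>. has_mean \<nu> \<Gamma> \<theta> \<omega> \<longrightarrow>
        integrable \<nu> (\<lambda>x. expdens \<nu> \<Gamma> \<theta> x *\<^sub>R \<Gamma>\<pi> x) \<and>
        (\<integral>x. expdens \<nu> \<Gamma> \<theta> x *\<^sub>R \<Gamma>\<pi> x \<partial>\<nu>) = L \<omega>)"

definition bregman :: "('h::real_inner \<Rightarrow> real) \<Rightarrow> 'h \<Rightarrow> 'h \<Rightarrow> real" where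
  "bregman h \<omega> \<omega>' = h \<omega> - h \<omega>' - gradient h \<omega>' \<bullet> (\<omega> - \<omega>')"

definition rel_strongly_convex :: "real \<Rightarrow> ('h::real_inner \<Rightarrow> real) \<Rightarrow> ('h \<Rightarrow> real) \<Rightarrow> 'h set \<Rightarrow> bool" where
  "rel_strongly_convex m f h S \<longleftrightarrow>
     (\<forall>\<omega>\<in>S. f differentiable (at \<omega>) \<and> h differentiable (at \<omega>)) \<and>
     (\<forall>\<omega>\<in>S. \<forall>\<omega>'\<in>S. m * bregman h \<omega> \<omega>' \<le> bregman f \<omega> \<omega>')"

definition rel_smooth :: "real \<Rightarrow> ('h::real_inner \<Rightarrow> real) \<Rightarrow> ('h \<Rightarrow> real) \<Rightarrow> 'h set \<Rightarrow> bool" where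
  "rel_smooth l f h S \<longleftrightarrow>
     (\<forall>\<omega>\<in>S. f differentiable (at \<omega>) \<and> h differentiable (at \<omega>)) \<and>
     (\<forall>\<omega>\<in>S. \<forall>\<omega>'\<in>S. bregman f \<omega> \<omega>' \<le> l * bregman h \<omega> \<omega>')"

text \<open>Bregman projection w.r.t. A* onto C: the (unique) minimiser of
  d_{A*}(., omega) over C (A* = +infinity outside dom A*, so over C inter dom A*).\<close>
definition proj_Astar :: "'x measure \<Rightarrow> ('x \<Rightarrow> 'h::real_inner) \<Rightarrow> 'h set \<Rightarrow> 'h \<Rightarrow> 'h" where
  "proj_Astar \<nu> \<Gamma> C \<omega> = (THE \<omega>'. \<omega>' \<in> C \<inter> domAstar \<nu> \<Gamma> \<and>
      (\<forall>\<omega>''\<in>C \<inter> domAstar \<nu> \<Gamma>. bregman (conjA_r \<nu> \<Gamma>) \<omega>' \<omega> \<le> bregman (conjA_r \<nu> \<Gamma>) \<omega>'' \<omega>))"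

definition unique_minimizer :: "('h \<Rightarrow> ereal) \<Rightarrow> 'h set \<Rightarrow> 'h \<Rightarrow> bool" where
  "unique_minimizer f S w \<longleftrightarrow> w \<in> S \<and> (\<forall>\<omega>\<in>S. f w \<le> f \<omega>) \<and>
     (\<forall>\<omega>\<in>S. (\<forall>\<omega>'\<in>S. f \<omega> \<le> f \<omega>') \<longrightarrow> \<omega> = w)"

end

theory Submission
  imports Defs
begin

(* Everything rests on the Legendre duality between the log-partition function A and its
   conjugate A^*. For a minimal steep family, the mean map grad A is a bijection from int dom A
   onto int dom A^* whose inverse is grad A^*: Fenchel-Young inequalities at points where A or A^*
   is finite give linear coercivity bounds, steepness keeps limits of interior parameters with
   convergent means away from the boundary of dom A, and minimality makes the mean determine the
   parameter.
   Under LERC, KL(q_omega, pi) = A^*(omega) - <L^T theta_pi, omega> + A_pi(theta_pi) for every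
   mean omega, so f^D_pi is A^* tilted by a linear function. Hence its Bregman divergence is that
   of A^*, which is part (ii). For part (i), the tilted conjugate is lower semicontinuous and
   strictly convex with bounded sublevel sets when C is compact or L^T theta_pi is interior, its
   minimiser over C is interior by steepness, and for interior L^T theta_pi it differs from
   d_{A^*}(., grad A(L^T theta_pi)) by a constant. *)

section \<open>Convexity and coercivity\<close>

lemma add_one_less_exp:
  fixes x :: real
  assumes "x \<noteq> 0"
  shows "1 + x < exp x"
proof (cases "0 \<le> 1 + x / 2")
  case True
  have "1 + x < 1 + x + x\<^sup>2 / 4" using assms by simp
  also have "\<dots> = (1 + x / 2)\<^sup>2" by (simp add: power2_eq_square field_simps)
  also have "\<dots> \<le> exp (x / 2) ^ 2" using True by (intro power_mono) auto
  also have "\<dots> = exp x" by (simp flip: exp_double)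
  finally show ?thesis .
next
  case False
  then show ?thesis using exp_gt_zero[of x] by linarith
qed

lemma exp_tangent_le: "exp m * (1 + (y - m)) \<le> exp (y::real)"
  using mult_left_mono[OF exp_ge_add_one_self[of "y - m"], of "exp m"] by (simp flip: exp_add)

lemma exp_tangent_less: "y \<noteq> m \<Longrightarrow> exp m * (1 + (y - m)) < exp (y::real)"
  using mult_strict_left_mono[OF add_one_less_exp[of "y - m"], of "exp m"] by (simp flip: exp_add)

lemma abs_le_exp_add_exp_minus: "\<epsilon> * \<bar>y\<bar> \<le> exp (\<epsilon> * y) + exp (- (\<epsilon> * y))" if "\<epsilon> \<ge> 0" for \<epsilon> y :: real
proof -
  have "\<epsilon> * \<bar>y\<bar> \<le> exp (\<epsilon> * \<bar>y\<bar>)" using exp_ge_add_one_self[of "\<epsilon> * \<bar>y\<bar>"] by linarith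
  also have "\<dots> \<le> exp (\<epsilon> * y) + exp (- (\<epsilon> * y))"
    by (cases "y \<ge> 0") (auto simp: add_increasing2 add_increasing)
  finally show ?thesis .
qed

lemma midpoint_in_convex: "convex S \<Longrightarrow> a \<in> S \<Longrightarrow> b \<in> S \<Longrightarrow> midpoint a b \<in> S"
  using convexD[of S a b "1/2" "1/2"] by (simp add: midpoint_def scaleR_right_distrib inverse_eq_divide)

lemma neg_abs_le_one_minus_mult:
  fixes t c x :: real
  assumes "0 < t" "t < 1" "t * c \<le> t * x"
  shows "- \<bar>c\<bar> \<le> (1 - t) * x"
proof -
  have "(1 - t) * (- \<bar>c\<bar>) \<le> (1 - t) * x" using assms by (intro mult_left_mono) auto
  moreover have "(1 - t) * \<bar>c\<bar> \<le> \<bar>c\<bar>" using assms(1,2) by (simp add: mult_left_le_one_le)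
  ultimately show ?thesis by simp
qed

lemma convex_interior_approach:
  fixes S :: "'a::euclidean_space set"
  assumes "convex S" "p \<in> interior S" "x \<in> S"
  obtains t :: "nat \<Rightarrow> real" where "\<And>n. 0 < t n" "\<And>n. t n < 1"
    "\<And>n. x + t n *\<^sub>R (p - x) \<in> interior S" "(\<lambda>n. x + t n *\<^sub>R (p - x)) \<longlonglongrightarrow> x"
proof
  let ?t = "\<lambda>n. 1 / real (Suc (Suc n))"
  show "0 < ?t n" "?t n < 1" for n by auto
  show "x + ?t n *\<^sub>R (p - x) \<in> interior S" for n
    using mem_interior_convex_shrink[OF assms, of "?t n"] by (simp add: algebra_simps)
  have "?t \<longlonglongrightarrow> 0"
    using LIMSEQ_Suc[OF LIMSEQ_Suc[OF lim_inverse_n']] by simp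
  then have "(\<lambda>n. x + ?t n *\<^sub>R (p - x)) \<longlonglongrightarrow> x + 0 *\<^sub>R (p - x)"
    by (intro tendsto_intros)
  then show "(\<lambda>n. x + ?t n *\<^sub>R (p - x)) \<longlonglongrightarrow> x" by simp
qed

lemma gradient_eqI:
  fixes f :: "'a::real_inner \<Rightarrow> real"
  assumes "(f has_derivative (\<lambda>v. g \<bullet> v)) (at x)"
  shows "gradient f x = g"
proof -
  have "(f has_derivative (\<lambda>v. gradient f x \<bullet> v)) (at x)"
    unfolding gradient_def by (rule someI[of _ g]) (rule assms)
  then have "(\<lambda>v. gradient f x \<bullet> v) = (\<lambda>v. g \<bullet> v)"
    using assms by (rule has_derivative_unique)
  then show ?thesis by (metis vector_eq_rdot)
qed

lemma has_derivative_subgradient: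
  fixes f :: "'a::real_inner \<Rightarrow> real"
  assumes "f differentiable (at x)" "open S" "x \<in> S"
    and sub: "\<And>y. y \<in> S \<Longrightarrow> f x + g \<bullet> (y - x) \<le> f y"
  shows "(f has_derivative (\<lambda>v. g \<bullet> v)) (at x)"
proof -
  obtain F where F: "(f has_derivative F) (at x)" using assms(1) by (auto simp: differentiable_def)
  have "((\<lambda>y. f y - g \<bullet> y) has_derivative (\<lambda>v. F v - g \<bullet> v)) (at x)"
    by (intro has_derivative_diff F has_derivative_inner_right has_derivative_ident)
  moreover have "\<forall>y\<in>S. f x - g \<bullet> x \<le> f y - g \<bullet> y"
    using sub by (simp add: algebra_simps)
  ultimately have "(\<lambda>v. F v - g \<bullet> v) = (\<lambda>v. 0)"
    using differential_zero_maxmin[OF assms(3,2)] by blast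
  then have "F = (\<lambda>v. g \<bullet> v)" by (simp add: fun_eq_iff)
  then show ?thesis using F by simp
qed

lemma has_derivative_continuous_subgradient:
  fixes f :: "'a::real_inner \<Rightarrow> real" and g :: "'a \<Rightarrow> 'a"
  assumes "open S" "x \<in> S" "isCont g x"
    and sub: "\<And>y z. y \<in> S \<Longrightarrow> z \<in> S \<Longrightarrow> f y + g y \<bullet> (z - y) \<le> f z"
  shows "(f has_derivative (\<lambda>v. g x \<bullet> v)) (at x)"
  unfolding has_derivative_at'
proof (intro conjI allI impI bounded_linear_inner_right)
  fix e :: real assume "e > 0"
  obtain d1 where d1: "d1 > 0" "\<And>y. dist y x < d1 \<Longrightarrow> dist (g y) (g x) < e"
    using \<open>isCont g x\<close> \<open>e > 0\<close> unfolding continuous_at_eps_delta by blast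
  obtain d2 where d2: "d2 > 0" "ball x d2 \<subseteq> S" using assms(1,2) open_contains_ball by blast
  have "norm (f y - f x - g x \<bullet> (y - x)) / norm (y - x) < e"
    if y: "0 < norm (y - x)" "norm (y - x) < min d1 d2" for y
  proof -
    have "y \<in> S" using y d2 by (auto simp: dist_norm norm_minus_commute)
    then have "0 \<le> f y - f x - g x \<bullet> (y - x)" "f y - f x - g x \<bullet> (y - x) \<le> (g y - g x) \<bullet> (y - x)"
      using sub[OF assms(2)] sub[of y x] assms(2)
      by (auto simp: algebra_simps)
    then have "norm (f y - f x - g x \<bullet> (y - x)) \<le> norm (g y - g x) * norm (y - x)"
      using norm_cauchy_schwarz[of "g y - g x" "y - x"] by simp
    also have "\<dots> < e * norm (y - x)"
      using d1(2)[of y] y by (intro mult_strict_right_mono) (auto simp: dist_norm)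
    finally show ?thesis using y by (simp add: field_simps)
  qed
  then show "\<exists>d>0. \<forall>y. 0 < norm (y - x) \<and> norm (y - x) < d \<longrightarrow>
      norm (f y - f x - g x \<bullet> (y - x)) / norm (y - x) < e"
    using d1(1) d2(1) by (intro exI[of _ "min d1 d2"]) auto
qed

lemma closed_sublevels_attains_min:
  fixes f :: "'a::heine_borel \<Rightarrow> real"
  assumes "x0 \<in> S" and closed: "\<And>c. closed {x \<in> S. f x \<le> c}"
    and bounded: "bounded {x \<in> S. f x \<le> f x0}"
  shows "\<exists>x\<in>S. \<forall>y\<in>S. f x \<le> f y"
proof (rule ccontr)
  assume "\<not> ?thesis"
  then have smaller: "\<exists>y\<in>S. f y < f x" if "x \<in> S" for x using that by (meson not_le)
  let ?K = "{x \<in> S. f x \<le> f x0}"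
  have "compact ?K" using closed bounded by (simp add: compact_eq_bounded_closed)
  moreover have "open (- {x \<in> S. f x \<le> f y})" for y using closed by (simp add: open_Compl)
  moreover have "?K \<subseteq> (\<Union>y\<in>?K. - {x \<in> S. f x \<le> f y})"
  proof
    fix x assume x: "x \<in> ?K"
    then obtain y where "y \<in> S" "f y < f x" using smaller by blast
    then show "x \<in> (\<Union>y\<in>?K. - {x \<in> S. f x \<le> f y})" using x by force
  qed
  ultimately obtain C where C: "C \<subseteq> ?K" "finite C" "?K \<subseteq> (\<Union>y\<in>C. - {x \<in> S. f x \<le> f y})"
    by (rule compactE_image)
  then have "C \<noteq> {}" using \<open>x0 \<in> S\<close> by blast
  then have "Min (f ` C) \<in> f ` C" using C(2) by simp
  then obtain y where y: "y \<in> C" "f y = Min (f ` C)" by auto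
  then have "y \<in> ?K" using C(1) by blast
  then obtain z where "z \<in> C" "y \<notin> {x \<in> S. f x \<le> f z}" using C(3) by blast
  then have "z \<in> C" "f z < f y" using \<open>y \<in> ?K\<close> by auto
  moreover have "f y \<le> f z" using y(2) Min_le[of "f ` C" "f z"] C(2) \<open>z \<in> C\<close> by simp
  ultimately show False by simp
qed

(* Fenchel-Young at the 2 DIM points p +- h e_i bounds every coordinate of y. *)
lemma fenchel_young_linear_growth:
  fixes F G :: "'a::euclidean_space \<Rightarrow> real"
  assumes FY: "\<And>x y. x \<in> X \<Longrightarrow> y \<in> Y \<Longrightarrow> x \<bullet> y \<le> F x + G y" and p: "p \<in> interior X"
  shows "\<exists>\<delta>>0. \<exists>K. \<forall>y\<in>Y. \<delta> * norm y \<le> K + G y - p \<bullet> y"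
proof -
  obtain e where e: "e > 0" "ball p e \<subseteq> X" using p by (meson mem_interior)
  define h where "h = e / 2"
  define K where "K = (\<Sum>i\<in>Basis. \<bar>F (p + h *\<^sub>R i)\<bar> + \<bar>F (p - h *\<^sub>R i)\<bar>)"
  have "h * norm y \<le> DIM('a) * (K + G y - p \<bullet> y)" if y: "y \<in> Y" for y
  proof -
    have "h * \<bar>y \<bullet> i\<bar> \<le> K + G y - p \<bullet> y" if i: "i \<in> Basis" for i
    proof -
      have "dist p (p + h *\<^sub>R i) < e" "dist p (p - h *\<^sub>R i) < e"
        using e(1) i by (simp_all add: dist_norm h_def)
      then have "p + h *\<^sub>R i \<in> X" "p - h *\<^sub>R i \<in> X" using e(2) by auto
      from FY[OF this(1) y] FY[OF this(2) y]
      have "p \<bullet> y + h * (y \<bullet> i) \<le> F (p + h *\<^sub>R i) + G y"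
        "p \<bullet> y - h * (y \<bullet> i) \<le> F (p - h *\<^sub>R i) + G y"
        by (simp_all add: inner_add_left inner_diff_left inner_commute[of i y])
      moreover have "\<bar>F (p + h *\<^sub>R i)\<bar> + \<bar>F (p - h *\<^sub>R i)\<bar> \<le> K"
        unfolding K_def using i by (intro member_le_sum) auto
      ultimately show ?thesis
        by (auto simp: abs_le_iff)
    qed
    then have "(\<Sum>i\<in>Basis. h * \<bar>y \<bullet> i\<bar>) \<le> DIM('a) * (K + G y - p \<bullet> y)"
      using sum_bounded_above[of Basis "\<lambda>i. h * \<bar>y \<bullet> i\<bar>"] by simp
    moreover have "h * norm y \<le> h * (\<Sum>i\<in>Basis. \<bar>y \<bullet> i\<bar>)"
      using norm_le_l1[of y] e(1) by (intro mult_left_mono) (auto simp: h_def)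
    ultimately show ?thesis by (simp add: sum_distrib_left)
  qed
  then have "\<forall>y\<in>Y. h / DIM('a) * norm y \<le> K + G y - p \<bullet> y"
    by (simp add: field_simps)
  then show ?thesis using e(1) by (intro exI[of _ "h / DIM('a)"]) (auto simp: h_def)
qed

lemma fenchel_young_pairs_bounded:
  fixes F G :: "'a::euclidean_space \<Rightarrow> real" and xs ys :: "nat \<Rightarrow> 'a"
  assumes FY: "\<And>x y. x \<in> X \<Longrightarrow> y \<in> Y \<Longrightarrow> x \<bullet> y \<le> F x + G y" and p: "p \<in> interior X"
    and pairs: "\<And>n. xs n \<in> X" "\<And>n. ys n \<in> Y" "\<And>n. F (xs n) + G (ys n) = xs n \<bullet> ys n"
    and "bounded (range xs)" and "bdd_below (range (\<lambda>n. (p - xs n) \<bullet> ys n))"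
  shows "bounded (range ys)"
proof -
  obtain \<delta> K where growth: "\<delta> > 0" "\<And>y. y \<in> Y \<Longrightarrow> \<delta> * norm y \<le> K + G y - p \<bullet> y"
    using fenchel_young_linear_growth[OF FY p] by blast
  obtain R where R: "\<And>n. norm (xs n) \<le> R" using \<open>bounded (range xs)\<close> by (auto simp: bounded_iff)
  obtain c where c: "\<And>n. c \<le> (p - xs n) \<bullet> ys n" using \<open>bdd_below _\<close> by (auto simp: bdd_below_def)
  have "norm (ys n) \<le> (K + R * norm (ys 0) + G (ys 0) - c) / \<delta>" for n
  proof -
    have "- (norm (xs n) * norm (ys 0)) \<le> xs n \<bullet> ys 0"
      using norm_cauchy_schwarz[of "- xs n" "ys 0"] by simp
    moreover have "xs n \<bullet> ys 0 \<le> F (xs n) + G (ys 0)" using FY pairs by blast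
    moreover have "norm (xs n) * norm (ys 0) \<le> R * norm (ys 0)" using R by (intro mult_right_mono) auto
    moreover have "G (ys n) - p \<bullet> ys n = - F (xs n) - (p - xs n) \<bullet> ys n"
      using pairs(3)[of n] by (simp add: inner_diff_left)
    ultimately have "\<delta> * norm (ys n) \<le> K + R * norm (ys 0) + G (ys 0) - c"
      using growth(2)[OF pairs(2)[of n]] c[of n] by linarith
    then show ?thesis using growth(1) by (simp add: field_simps)
  qed
  then show ?thesis by (auto simp: bounded_iff)
qed

section \<open>Exponential families\<close>

locale exp_family =
  fixes \<nu> :: "'x measure" and \<Gamma> :: "'x \<Rightarrow> 'h::euclidean_space"
  assumes space_nonnull: "emeasure \<nu> (space \<nu>) \<noteq> 0"
    and measurable_statistic[measurable]: "\<Gamma> \<in> borel_measurable \<nu>"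
begin

abbreviation "Z \<equiv> partition \<nu> \<Gamma>"
abbreviation "D \<equiv> domA \<nu> \<Gamma>"
abbreviation "A \<equiv> logpart \<nu> \<Gamma>"
abbreviation "q \<equiv> expdens \<nu> \<Gamma>"

lemma partition_pos: "Z \<theta> > 0"
proof (rule ccontr)
  assume "\<not> Z \<theta> > 0"
  then have "Z \<theta> = 0" by simp
  then have "AE x in \<nu>. ennreal (exp (\<theta> \<bullet> \<Gamma> x)) = 0"
    unfolding partition_def by (subst (asm) nn_integral_0_iff_AE) auto
  then have "ae_filter \<nu> = bot" by (simp add: eventually_False)
  then show False using space_nonnull ae_filter_eq_bot_iff by blast
qed

lemma
  assumes "\<theta> \<in> D"
  shows partition_eq_exp_logpart: "Z \<theta> = ennreal (exp (A \<theta>))"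
    and integrable_exp_inner: "integrable \<nu> (\<lambda>x. exp (\<theta> \<bullet> \<Gamma> x))"
    and integral_exp_inner: "(\<integral>x. exp (\<theta> \<bullet> \<Gamma> x) \<partial>\<nu>) = exp (A \<theta>)"
proof -
  have fin: "Z \<theta> < \<infinity>" using assms by (simp add: domA_def)
  then have "enn2real (Z \<theta>) > 0" using partition_pos[of \<theta>] by (simp add: enn2real_positive_iff)
  then have exp_A: "exp (A \<theta>) = enn2real (Z \<theta>)" by (simp add: logpart_def)
  show "Z \<theta> = ennreal (exp (A \<theta>))" unfolding exp_A using fin by (simp add: ennreal_enn2real_if)
  show "integrable \<nu> (\<lambda>x. exp (\<theta> \<bullet> \<Gamma> x))"
    by (rule integrableI_nonneg) (use fin in \<open>auto simp: partition_def\<close>)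
  show "(\<integral>x. exp (\<theta> \<bullet> \<Gamma> x) \<partial>\<nu>) = exp (A \<theta>)"
    unfolding exp_A by (subst integral_eq_nn_integral) (auto simp: partition_def)
qed

lemma expdens_pos: "q \<theta> x > 0"
  by (simp add: expdens_def)

lemma expdens_eq: "q \<theta> x = exp (\<theta> \<bullet> \<Gamma> x) / exp (A \<theta>)"
  by (simp add: expdens_def exp_diff)

lemma measurable_expdens[measurable]: "q \<theta> \<in> borel_measurable \<nu>"
  unfolding expdens_def by measurable

lemma
  assumes "\<theta> \<in> D"
  shows integrable_expdens: "integrable \<nu> (q \<theta>)"
    and integral_expdens: "(\<integral>x. q \<theta> x \<partial>\<nu>) = 1"
proof -
  have "q \<theta> = (\<lambda>x. exp (\<theta> \<bullet> \<Gamma> x) / exp (A \<theta>))" by (simp add: fun_eq_iff expdens_eq)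
  then show "integrable \<nu> (q \<theta>)" "(\<integral>x. q \<theta> x \<partial>\<nu>) = 1"
    using integrable_exp_inner[OF assms] integral_exp_inner[OF assms] by simp_all
qed

lemma convex_domA: "convex D"
proof (rule convexI)
  fix a b :: 'h and u v :: real
  assume ab: "a \<in> D" "b \<in> D" and uv: "0 \<le> u" "0 \<le> v" "u + v = 1"
  have "exp ((u *\<^sub>R a + v *\<^sub>R b) \<bullet> \<Gamma> x) \<le> u * exp (a \<bullet> \<Gamma> x) + v * exp (b \<bullet> \<Gamma> x)" for x
    using convex_onD[OF exp_convex, of v "a \<bullet> \<Gamma> x" "b \<bullet> \<Gamma> x"] uv
    by (simp add: inner_add_left eq_diff_eq[symmetric])
  then have "Z (u *\<^sub>R a + v *\<^sub>R b)
      \<le> (\<integral>\<^sup>+x. ennreal u * ennreal (exp (a \<bullet> \<Gamma> x)) + ennreal v * ennreal (exp (b \<bullet> \<Gamma> x)) \<partial>\<nu>)"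
    unfolding partition_def using uv by (intro nn_integral_mono) (simp flip: ennreal_mult ennreal_plus)
  also have "\<dots> = ennreal u * Z a + ennreal v * Z b"
    unfolding partition_def by (simp add: nn_integral_add nn_integral_cmult)
  also have "\<dots> < \<infinity>" using ab by (simp add: domA_def ennreal_mult_less_top)
  finally show "u *\<^sub>R a + v *\<^sub>R b \<in> D" by (simp add: domA_def)
qed

(* Jensen's inequality for exp under q_theta, with the gap to the tangent at the mean made
   explicit. *)
lemma integral_exp_tangent_gap:
  assumes hm: "has_mean \<nu> \<Gamma> \<theta> \<omega>" and "\<theta>' \<in> D"
  defines "d \<equiv> \<theta>' - \<theta>"
  defines "T \<equiv> \<lambda>x. q \<theta> x * (exp (d \<bullet> \<Gamma> x) - exp (d \<bullet> \<omega>) * (1 + (d \<bullet> \<Gamma> x - d \<bullet> \<omega>)))"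
  shows "integrable \<nu> T" "(\<integral>x. T x \<partial>\<nu>) = exp (A \<theta>' - A \<theta>) - exp (d \<bullet> \<omega>)"
proof -
  have \<theta>: "\<theta> \<in> D" and mean: "integrable \<nu> (\<lambda>x. q \<theta> x *\<^sub>R \<Gamma> x)" "(\<integral>x. q \<theta> x *\<^sub>R \<Gamma> x \<partial>\<nu>) = \<omega>"
    using hm by (auto simp: has_mean_def)
  have tilt: "q \<theta> x * exp (d \<bullet> \<Gamma> x) = exp (\<theta>' \<bullet> \<Gamma> x) / exp (A \<theta>)" for x
    by (simp add: expdens_eq d_def inner_diff_left flip: exp_add)
  have lin: "q \<theta> x * (d \<bullet> \<Gamma> x) = d \<bullet> (q \<theta> x *\<^sub>R \<Gamma> x)" for x
    by simp
  let ?m = "d \<bullet> \<omega>"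
  have T_eq: "T = (\<lambda>x. exp (\<theta>' \<bullet> \<Gamma> x) / exp (A \<theta>) - exp ?m * (1 - ?m) * q \<theta> x
      - exp ?m * (d \<bullet> (q \<theta> x *\<^sub>R \<Gamma> x)))"
    unfolding T_def by (auto simp: fun_eq_iff algebra_simps simp flip: tilt lin)
  have ints: "integrable \<nu> (\<lambda>x. exp (\<theta>' \<bullet> \<Gamma> x) / exp (A \<theta>))"
    "integrable \<nu> (\<lambda>x. exp ?m * (1 - ?m) * q \<theta> x)" "integrable \<nu> (\<lambda>x. exp ?m * (d \<bullet> (q \<theta> x *\<^sub>R \<Gamma> x)))"
    using integrable_exp_inner[OF \<open>\<theta>' \<in> D\<close>] integrable_expdens[OF \<theta>] integrable_inner_right[OF mean(1)]
    by auto
  show "integrable \<nu> T"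
    unfolding T_eq using ints by auto
  have lin_int: "(\<integral>x. q \<theta> x * (d \<bullet> \<Gamma> x) \<partial>\<nu>) = ?m"
    using integral_inner_right[OF mean(1), of d] mean(2) by simp
  have "(\<integral>x. T x \<partial>\<nu>) = exp (A \<theta>') / exp (A \<theta>) - exp ?m * (1 - ?m) * 1 - exp ?m * ?m"
    unfolding T_eq using ints integral_expdens[OF \<theta>] integral_exp_inner[OF \<open>\<theta>' \<in> D\<close>] lin_int
    by simp
  then show "(\<integral>x. T x \<partial>\<nu>) = exp (A \<theta>' - A \<theta>) - exp ?m"
    by (simp add: exp_diff algebra_simps)
qed

lemma mean_subgradient:
  assumes "has_mean \<nu> \<Gamma> \<theta> \<omega>" "\<theta>' \<in> D"
  shows "A \<theta> + (\<theta>' - \<theta>) \<bullet> \<omega> \<le> A \<theta>'"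
proof -
  note T = integral_exp_tangent_gap[OF assms]
  have "0 \<le> exp (A \<theta>' - A \<theta>) - exp ((\<theta>' - \<theta>) \<bullet> \<omega>)"
    unfolding T(2)[symmetric] using exp_tangent_le
    by (intro integral_nonneg_AE AE_I2 mult_nonneg_nonneg less_imp_le[OF expdens_pos]) simp
  then show ?thesis by simp
qed

lemma mean_subgradient_tight_AE:
  assumes "has_mean \<nu> \<Gamma> \<theta> \<omega>" "\<theta>' \<in> D" and eq: "A \<theta>' = A \<theta> + (\<theta>' - \<theta>) \<bullet> \<omega>"
  shows "AE x in \<nu>. (\<theta>' - \<theta>) \<bullet> \<Gamma> x = (\<theta>' - \<theta>) \<bullet> \<omega>"
proof -
  note T = integral_exp_tangent_gap[OF assms(1,2)]
  let ?d = "\<theta>' - \<theta>"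
  have nonneg: "AE x in \<nu>. 0 \<le> q \<theta> x * (exp (?d \<bullet> \<Gamma> x) - exp (?d \<bullet> \<omega>) * (1 + (?d \<bullet> \<Gamma> x - ?d \<bullet> \<omega>)))"
    using exp_tangent_le by (intro AE_I2 mult_nonneg_nonneg less_imp_le[OF expdens_pos]) simp
  have "(\<integral>x. q \<theta> x * (exp (?d \<bullet> \<Gamma> x) - exp (?d \<bullet> \<omega>) * (1 + (?d \<bullet> \<Gamma> x - ?d \<bullet> \<omega>))) \<partial>\<nu>) = 0"
    using T(2) eq by simp
  then have "AE x in \<nu>. q \<theta> x * (exp (?d \<bullet> \<Gamma> x) - exp (?d \<bullet> \<omega>) * (1 + (?d \<bullet> \<Gamma> x - ?d \<bullet> \<omega>))) = 0"
    using integral_nonneg_eq_0_iff_AE[OF T(1) nonneg] by simp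
  then show ?thesis
  proof eventually_elim
    fix x assume "q \<theta> x * (exp (?d \<bullet> \<Gamma> x) - exp (?d \<bullet> \<omega>) * (1 + (?d \<bullet> \<Gamma> x - ?d \<bullet> \<omega>))) = 0"
    then have "exp (?d \<bullet> \<omega>) * (1 + (?d \<bullet> \<Gamma> x - ?d \<bullet> \<omega>)) = exp (?d \<bullet> \<Gamma> x)"
      using expdens_pos[of \<theta> x] by simp
    then show "?d \<bullet> \<Gamma> x = ?d \<bullet> \<omega>" using exp_tangent_less by force
  qed
qed

(* eps |t| <= exp (eps t) + exp (- eps t) dominates q_theta |Gamma . e_i| by the unnormalised
   densities at theta +- eps e_i. *)
lemma interior_has_mean:
  assumes "\<theta> \<in> interior D"
  shows "has_mean \<nu> \<Gamma> \<theta> (\<integral>x. q \<theta> x *\<^sub>R \<Gamma> x \<partial>\<nu>)"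
proof -
  obtain e where e: "e > 0" "ball \<theta> e \<subseteq> D" using assms by (meson mem_interior)
  define \<epsilon> where "\<epsilon> = e / 2"
  have \<epsilon>: "\<epsilon> > 0" using e by (simp add: \<epsilon>_def)
  have shifted: "\<theta> + \<epsilon> *\<^sub>R i \<in> D" "\<theta> - \<epsilon> *\<^sub>R i \<in> D" if "i \<in> Basis" for i
  proof -
    have "dist \<theta> (\<theta> + \<epsilon> *\<^sub>R i) < e" "dist \<theta> (\<theta> - \<epsilon> *\<^sub>R i) < e"
      using e(1) that by (simp_all add: dist_norm \<epsilon>_def)
    then show "\<theta> + \<epsilon> *\<^sub>R i \<in> D" "\<theta> - \<epsilon> *\<^sub>R i \<in> D" using e(2) by auto
  qed
  define E where "E x = (\<Sum>i\<in>Basis. exp ((\<theta> + \<epsilon> *\<^sub>R i) \<bullet> \<Gamma> x) + exp ((\<theta> - \<epsilon> *\<^sub>R i) \<bullet> \<Gamma> x))" for x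
  have int: "integrable \<nu> (\<lambda>x. E x / (\<epsilon> * exp (A \<theta>)))"
    unfolding E_def using shifted
    by (intro Bochner_Integration.integrable_divide Bochner_Integration.integrable_sum
        Bochner_Integration.integrable_add integrable_exp_inner) auto
  have bound: "norm (q \<theta> x *\<^sub>R \<Gamma> x) \<le> E x / (\<epsilon> * exp (A \<theta>))" for x
  proof -
    have E_eq: "E x = exp (\<theta> \<bullet> \<Gamma> x) * (\<Sum>i\<in>Basis. exp (\<epsilon> * (i \<bullet> \<Gamma> x)) + exp (- (\<epsilon> * (i \<bullet> \<Gamma> x))))"
      unfolding E_def sum_distrib_left
      by (intro sum.cong refl) (simp add: inner_add_left inner_diff_left distrib_left flip: exp_add)
    have "\<epsilon> * norm (q \<theta> x *\<^sub>R \<Gamma> x) \<le> q \<theta> x * (\<Sum>i\<in>Basis. \<epsilon> * \<bar>i \<bullet> \<Gamma> x\<bar>)"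
      using norm_le_l1[of "\<Gamma> x"] expdens_pos[of \<theta> x] \<epsilon>
      by (simp add: abs_mult mult.left_commute inner_commute[of "\<Gamma> x"] flip: sum_distrib_left)
    also have "\<dots> \<le> q \<theta> x * (\<Sum>i\<in>Basis. exp (\<epsilon> * (i \<bullet> \<Gamma> x)) + exp (- (\<epsilon> * (i \<bullet> \<Gamma> x))))"
      using expdens_pos[of \<theta> x] \<epsilon>
      by (intro mult_left_mono sum_mono abs_le_exp_add_exp_minus) auto
    also have "\<dots> = E x / exp (A \<theta>)" by (simp add: E_eq expdens_eq)
    finally show ?thesis using \<epsilon> by (simp add: field_simps)
  qed
  have "integrable \<nu> (\<lambda>x. q \<theta> x *\<^sub>R \<Gamma> x)"
  proof (rule Bochner_Integration.integrable_bound[OF int])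
    show "(\<lambda>x. q \<theta> x *\<^sub>R \<Gamma> x) \<in> borel_measurable \<nu>" by measurable
    show "AE x in \<nu>. norm (q \<theta> x *\<^sub>R \<Gamma> x) \<le> norm (E x / (\<epsilon> * exp (A \<theta>)))"
      by (intro AE_I2 order_trans[OF bound]) (metis abs_ge_self real_norm_def)
  qed
  then show ?thesis using assms interior_subset by (auto simp: has_mean_def)
qed

lemma logpart_lsc:
  assumes "\<And>n. \<theta>s n \<in> D" "\<theta>s \<longlonglongrightarrow> \<theta>" and "\<And>n. A (\<theta>s n) \<le> a n" "a \<longlonglongrightarrow> a0"
  shows "\<theta> \<in> D" "A \<theta> \<le> a0"
proof -
  have "Z \<theta> = (\<integral>\<^sup>+x. liminf (\<lambda>n. ennreal (exp (\<theta>s n \<bullet> \<Gamma> x))) \<partial>\<nu>)"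
    unfolding partition_def
  proof (intro nn_integral_cong)
    fix x
    have "(\<lambda>n. ennreal (exp (\<theta>s n \<bullet> \<Gamma> x))) \<longlonglongrightarrow> ennreal (exp (\<theta> \<bullet> \<Gamma> x))"
      using assms(2) by (intro tendsto_ennrealI tendsto_intros)
    then show "ennreal (exp (\<theta> \<bullet> \<Gamma> x)) = liminf (\<lambda>n. ennreal (exp (\<theta>s n \<bullet> \<Gamma> x)))"
      by (metis lim_imp_Liminf trivial_limit_sequentially)
  qed
  also have "\<dots> \<le> liminf (\<lambda>n. Z (\<theta>s n))"
    unfolding partition_def by (rule nn_integral_liminf) simp
  also have "\<dots> \<le> liminf (\<lambda>n. ennreal (exp (a n)))"
    using assms(1,3) by (intro Liminf_mono always_eventually allI) (simp add: partition_eq_exp_logpart)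
  also have "\<dots> = ennreal (exp a0)"
    using assms(4) by (metis lim_imp_Liminf tendsto_ennrealI tendsto_exp trivial_limit_sequentially)
  finally have Z_le: "Z \<theta> \<le> ennreal (exp a0)" .
  then show "\<theta> \<in> D" using le_less_trans[OF Z_le ennreal_less_top] by (simp add: domA_def)
  then show "A \<theta> \<le> a0" using Z_le by (simp add: partition_eq_exp_logpart)
qed

lemma logpart_convex_combination:
  assumes "x \<in> D" "y \<in> D" "0 \<le> l" "l \<le> 1" and interior: "(1 - l) *\<^sub>R x + l *\<^sub>R y \<in> interior D"
  shows "A ((1 - l) *\<^sub>R x + l *\<^sub>R y) \<le> (1 - l) * A x + l * A y"
proof -
  define z where "z = (1 - l) *\<^sub>R x + l *\<^sub>R y"
  define g where "g = (\<integral>x. q z x *\<^sub>R \<Gamma> x \<partial>\<nu>)"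
  have g: "has_mean \<nu> \<Gamma> z g" unfolding g_def z_def by (rule interior_has_mean[OF interior])
  have "(1 - l) * (A z + (x - z) \<bullet> g) + l * (A z + (y - z) \<bullet> g) \<le> (1 - l) * A x + l * A y"
    using mean_subgradient[OF g assms(1)] mean_subgradient[OF g assms(2)] assms(3,4)
    by (intro add_mono mult_left_mono) auto
  moreover have "(1 - l) * ((x - z) \<bullet> g) + l * ((y - z) \<bullet> g) = 0"
    by (simp add: z_def algebra_simps)
  ultimately show ?thesis unfolding z_def[symmetric] by (simp add: algebra_simps)
qed

end

section \<open>Steep minimal families: the mean map and the conjugate\<close>

locale steep_exp_family = exp_family \<nu> \<Gamma> for \<nu> :: "'x measure" and \<Gamma> :: "'x \<Rightarrow> 'h::euclidean_space" +
  assumes interior_domA_nonempty: "interior D \<noteq> {}"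
    and minimal: "minimal \<nu> \<Gamma>"
    and steep: "steep \<nu> \<Gamma>"
begin

abbreviation "Dstar \<equiv> domAstar \<nu> \<Gamma>"
abbreviation "Astar \<equiv> conjA_r \<nu> \<Gamma>"

lemma domA_nonempty: "D \<noteq> {}"
  using interior_domA_nonempty interior_subset by blast

lemma conjA_ge: "\<theta> \<in> D \<Longrightarrow> ereal (\<theta> \<bullet> \<omega> - A \<theta>) \<le> conjA \<nu> \<Gamma> \<omega>"
  unfolding conjA_def by (rule SUP_upper)

lemma conjA_real:
  assumes "\<omega> \<in> Dstar"
  shows "conjA \<nu> \<Gamma> \<omega> = ereal (Astar \<omega>)"
proof -
  obtain \<theta> where "\<theta> \<in> D" using domA_nonempty by blast
  then show ?thesis using assms conjA_ge[of \<theta> \<omega>] unfolding conjA_r_def domAstar_def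
    by (cases "conjA \<nu> \<Gamma> \<omega>") auto
qed

lemma fenchel_young: "\<omega> \<in> Dstar \<Longrightarrow> \<theta> \<in> D \<Longrightarrow> \<theta> \<bullet> \<omega> \<le> A \<theta> + Astar \<omega>"
  using conjA_ge[of \<theta> \<omega>] conjA_real[of \<omega>] by simp

lemma fenchel_young_conj: "\<omega> \<in> Dstar \<Longrightarrow> \<theta> \<in> D \<Longrightarrow> \<omega> \<bullet> \<theta> \<le> Astar \<omega> + A \<theta>"
  using fenchel_young by (simp add: inner_commute add.commute)

lemma conjA_leI:
  assumes "\<And>\<theta>. \<theta> \<in> D \<Longrightarrow> \<theta> \<bullet> \<omega> - A \<theta> \<le> c"
  shows "\<omega> \<in> Dstar" "Astar \<omega> \<le> c"
proof -
  have le: "conjA \<nu> \<Gamma> \<omega> \<le> ereal c" unfolding conjA_def using assms by (intro SUP_least) auto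
  then show \<omega>: "\<omega> \<in> Dstar" by (auto simp: domAstar_def)
  show "Astar \<omega> \<le> c" using le conjA_real[OF \<omega>] by simp
qed

lemma conjA_at_mean:
  assumes "has_mean \<nu> \<Gamma> \<theta> \<omega>"
  shows "\<omega> \<in> Dstar" "Astar \<omega> = \<theta> \<bullet> \<omega> - A \<theta>"
proof -
  have \<theta>: "\<theta> \<in> D" using assms by (simp add: has_mean_def)
  have "\<theta>' \<bullet> \<omega> - A \<theta>' \<le> \<theta> \<bullet> \<omega> - A \<theta>" if "\<theta>' \<in> D" for \<theta>'
    using mean_subgradient[OF assms that] by (simp add: inner_diff_left)
  note le = conjA_leI[OF this]
  show "\<omega> \<in> Dstar" by (rule le(1))
  show "Astar \<omega> = \<theta> \<bullet> \<omega> - A \<theta>" using le(2) fenchel_young[OF le(1) \<theta>] by simp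
qed

lemma convex_domAstar: "convex Dstar"
proof (rule convexI)
  fix \<omega> \<omega>' and u v :: real assume \<omega>: "\<omega> \<in> Dstar" "\<omega>' \<in> Dstar" and uv: "0 \<le> u" "0 \<le> v" "u + v = 1"
  have "\<theta> \<bullet> (u *\<^sub>R \<omega> + v *\<^sub>R \<omega>') - A \<theta> \<le> u * Astar \<omega> + v * Astar \<omega>'" if "\<theta> \<in> D" for \<theta>
  proof -
    have "\<theta> \<bullet> (u *\<^sub>R \<omega> + v *\<^sub>R \<omega>') - A \<theta> = u * (\<theta> \<bullet> \<omega> - A \<theta>) + v * (\<theta> \<bullet> \<omega>' - A \<theta>)"
      using uv by (simp add: algebra_simps flip: distrib_right)
    also have "\<dots> \<le> u * Astar \<omega> + v * Astar \<omega>'"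
      using fenchel_young[OF \<omega>(1) that] fenchel_young[OF \<omega>(2) that] uv
      by (intro add_mono mult_left_mono) auto
    finally show ?thesis .
  qed
  then show "u *\<^sub>R \<omega> + v *\<^sub>R \<omega>' \<in> Dstar" by (rule conjA_leI)
qed

lemma mean_subgradient_tight_imp_eq:
  assumes "has_mean \<nu> \<Gamma> \<theta> \<omega>" "\<theta>' \<in> D" "A \<theta>' \<le> A \<theta> + (\<theta>' - \<theta>) \<bullet> \<omega>"
  shows "\<theta>' = \<theta>"
proof -
  have "A \<theta>' = A \<theta> + (\<theta>' - \<theta>) \<bullet> \<omega>" using assms mean_subgradient[OF assms(1,2)] by simp
  from mean_subgradient_tight_AE[OF assms(1,2) this] show ?thesis
    using minimal unfolding minimal_def by (metis eq_iff_diff_eq_0)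
qed

lemma has_mean_param_unique: "has_mean \<nu> \<Gamma> \<theta> \<omega> \<Longrightarrow> has_mean \<nu> \<Gamma> \<theta>' \<omega> \<Longrightarrow> \<theta>' = \<theta>"
  using mean_subgradient[of \<theta>' \<omega> \<theta>] by (intro mean_subgradient_tight_imp_eq)
    (auto simp: has_mean_def inner_diff_left)

lemma logpart_differentiable: "\<theta> \<in> interior D \<Longrightarrow> A differentiable (at \<theta>)"
  using steep by (simp add: steep_def)

lemma has_derivative_logpart_subgradient:
  assumes "\<theta> \<in> interior D" and sub: "\<And>y. y \<in> D \<Longrightarrow> A \<theta> + (y - \<theta>) \<bullet> \<omega> \<le> A y"
  shows "(A has_derivative (\<lambda>v. \<omega> \<bullet> v)) (at \<theta>)"
proof -
  have "A \<theta> + \<omega> \<bullet> (y - \<theta>) \<le> A y" if "y \<in> interior D" for y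
    using sub[of y] that interior_subset by (auto simp: inner_commute)
  then show ?thesis
    by (rule has_derivative_subgradient[OF logpart_differentiable[OF assms(1)] open_interior assms(1)])
qed

lemma has_derivative_logpart:
  assumes "\<theta> \<in> interior D" "has_mean \<nu> \<Gamma> \<theta> \<omega>"
  shows "(A has_derivative (\<lambda>v. \<omega> \<bullet> v)) (at \<theta>)"
  using assms(1) mean_subgradient[OF assms(2)] by (rule has_derivative_logpart_subgradient)

lemma has_mean_of_subgradient:
  assumes "\<theta> \<in> interior D" and sub: "\<And>y. y \<in> D \<Longrightarrow> A \<theta> + (y - \<theta>) \<bullet> \<omega> \<le> A y"
  shows "has_mean \<nu> \<Gamma> \<theta> \<omega>"
proof -
  let ?m = "\<integral>x. q \<theta> x *\<^sub>R \<Gamma> x \<partial>\<nu>"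
  have "(A has_derivative (\<lambda>v. ?m \<bullet> v)) (at \<theta>)"
    using has_derivative_logpart[OF assms(1) interior_has_mean[OF assms(1)]] .
  then have "?m = \<omega>"
    using has_derivative_logpart_subgradient[OF assms] by (metis has_derivative_unique vector_eq_rdot)
  then show ?thesis using interior_has_mean[OF assms(1)] by simp
qed

(* The blow-up part of steepness is used only here. *)
lemma mean_limit:
  fixes \<theta>s \<omega>s :: "nat \<Rightarrow> 'h"
  assumes \<theta>s: "\<And>n. \<theta>s n \<in> interior D" "\<And>n. has_mean \<nu> \<Gamma> (\<theta>s n) (\<omega>s n)"
    and lim: "\<theta>s \<longlonglongrightarrow> \<theta>" "\<omega>s \<longlonglongrightarrow> \<omega>"
  shows "\<theta> \<in> interior D" "has_mean \<nu> \<Gamma> \<theta> \<omega>"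
proof -
  show \<theta>_int: "\<theta> \<in> interior D"
  proof (rule ccontr)
    assume "\<theta> \<notin> interior D"
    moreover have "\<theta> \<in> closure D"
      using \<theta>s(1) lim(1) interior_subset unfolding closure_sequential by blast
    ultimately have "filterlim (\<lambda>n. norm (gradient A (\<theta>s n))) at_top sequentially"
      using steep \<theta>s(1) lim(1) unfolding steep_def frontier_def by blast
    moreover have "gradient A (\<theta>s n) = \<omega>s n" for n
      using has_derivative_logpart[OF \<theta>s] by (rule gradient_eqI)
    ultimately have "filterlim (\<lambda>n. norm (\<omega>s n)) at_top sequentially" by simp
    moreover have "(\<lambda>n. norm (\<omega>s n)) \<longlonglongrightarrow> norm \<omega>" using lim(2) by (rule tendsto_norm)
    ultimately show False
      using not_tendsto_and_filterlim_at_infinity[of sequentially "\<lambda>n. norm (\<omega>s n)"]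
      by (auto simp: filterlim_at_top_imp_at_infinity)
  qed
  have "A \<theta> \<le> A y - (y - \<theta>) \<bullet> \<omega>" if "y \<in> D" for y
  proof (rule logpart_lsc(2))
    show "\<And>n. \<theta>s n \<in> D" using \<theta>s(1) interior_subset by blast
    show "\<And>n. A (\<theta>s n) \<le> A y - (y - \<theta>s n) \<bullet> \<omega>s n"
      using mean_subgradient[OF \<theta>s(2) that] by (simp add: algebra_simps)
    show "(\<lambda>n. A y - (y - \<theta>s n) \<bullet> \<omega>s n) \<longlonglongrightarrow> A y - (y - \<theta>) \<bullet> \<omega>"
      using lim by (intro tendsto_intros)
  qed (rule lim(1))
  then show "has_mean \<nu> \<Gamma> \<theta> \<omega>"
    by (intro has_mean_of_subgradient[OF \<theta>_int]) (simp add: algebra_simps)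
qed

lemma mean_pairs_convergent_subseq:
  fixes \<theta>s \<omega>s :: "nat \<Rightarrow> 'h"
  assumes "\<And>n. \<theta>s n \<in> interior D" "\<And>n. has_mean \<nu> \<Gamma> (\<theta>s n) (\<omega>s n)"
    and "bounded (range \<theta>s)" "bounded (range \<omega>s)"
  obtains r \<theta> \<omega> where "strict_mono r" "(\<theta>s \<circ> r) \<longlonglongrightarrow> \<theta>" "(\<omega>s \<circ> r) \<longlonglongrightarrow> \<omega>"
    "\<theta> \<in> interior D" "has_mean \<nu> \<Gamma> \<theta> \<omega>"
proof -
  have "bounded (range (\<lambda>n. (\<theta>s n, \<omega>s n)))"
    using bounded_Times[OF assms(3,4)] by (rule bounded_subset) auto
  then obtain l r where r: "strict_mono r" "((\<lambda>n. (\<theta>s n, \<omega>s n)) \<circ> r) \<longlonglongrightarrow> l"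
    using bounded_imp_convergent_subsequence by blast
  have lim: "(\<theta>s \<circ> r) \<longlonglongrightarrow> fst l" "(\<omega>s \<circ> r) \<longlonglongrightarrow> snd l"
    using tendsto_fst[OF r(2)] tendsto_snd[OF r(2)] by (simp_all add: o_def)
  show thesis
    using that[OF r(1) lim mean_limit[of "\<theta>s \<circ> r" "\<omega>s \<circ> r", OF _ _ lim]] assms(1,2) by simp
qed

lemma means_bounded:
  fixes \<theta>s \<omega>s :: "nat \<Rightarrow> 'h"
  assumes "\<theta>1 \<in> interior D" "\<And>n. has_mean \<nu> \<Gamma> (\<theta>s n) (\<omega>s n)"
    and "bounded (range \<theta>s)" "bdd_below (range (\<lambda>n. (\<theta>1 - \<theta>s n) \<bullet> \<omega>s n))"
  shows "bounded (range \<omega>s)"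
  using fenchel_young assms conjA_at_mean[OF assms(2)]
  by (intro fenchel_young_pairs_bounded[of D Dstar A Astar \<theta>1 \<theta>s \<omega>s]) (auto simp: has_mean_def)

lemma params_bounded:
  fixes \<theta>s \<omega>s :: "nat \<Rightarrow> 'h"
  assumes "\<omega>1 \<in> interior Dstar" "\<And>n. has_mean \<nu> \<Gamma> (\<theta>s n) (\<omega>s n)"
    and "bounded (range \<omega>s)" "bdd_below (range (\<lambda>n. (\<omega>1 - \<omega>s n) \<bullet> \<theta>s n))"
  shows "bounded (range \<theta>s)"
  using fenchel_young_conj assms conjA_at_mean[OF assms(2)]
  by (intro fenchel_young_pairs_bounded[of Dstar D Astar A \<omega>1 \<omega>s \<theta>s])
    (auto simp: has_mean_def inner_commute)

lemma closed_logpart_tilt_sublevel: "closed {\<theta> \<in> D. A \<theta> - \<theta> \<bullet> \<omega> \<le> c}"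
  unfolding closed_sequential_limits
proof (intro allI impI, elim conjE)
  fix \<theta>s \<theta> assume in_set: "\<forall>n. \<theta>s n \<in> {\<theta> \<in> D. A \<theta> - \<theta> \<bullet> \<omega> \<le> c}" and "\<theta>s \<longlonglongrightarrow> \<theta>"
  have "(\<lambda>n. c + \<theta>s n \<bullet> \<omega>) \<longlonglongrightarrow> c + \<theta> \<bullet> \<omega>" using \<open>\<theta>s \<longlonglongrightarrow> \<theta>\<close> by (intro tendsto_intros)
  from logpart_lsc[OF _ \<open>\<theta>s \<longlonglongrightarrow> \<theta>\<close> _ this] in_set
  show "\<theta> \<in> {\<theta> \<in> D. A \<theta> - \<theta> \<bullet> \<omega> \<le> c}" by (auto simp: algebra_simps)
qed

lemma logpart_tilt_attains_min:
  assumes "\<omega> \<in> interior Dstar"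
  shows "\<exists>\<theta>\<in>D. \<forall>\<theta>'\<in>D. A \<theta> - \<theta> \<bullet> \<omega> \<le> A \<theta>' - \<theta>' \<bullet> \<omega>"
proof -
  obtain \<delta> K where growth: "\<delta> > 0" "\<And>\<theta>. \<theta> \<in> D \<Longrightarrow> \<delta> * norm \<theta> \<le> K + A \<theta> - \<omega> \<bullet> \<theta>"
    using fenchel_young_linear_growth[of Dstar D Astar A \<omega>, OF fenchel_young_conj assms] by blast
  obtain \<theta>0 where \<theta>0: "\<theta>0 \<in> D" using domA_nonempty by blast
  show ?thesis
  proof (rule closed_sublevels_attains_min[OF \<theta>0 closed_logpart_tilt_sublevel])
    have "{\<theta> \<in> D. A \<theta> - \<theta> \<bullet> \<omega> \<le> A \<theta>0 - \<theta>0 \<bullet> \<omega>} \<subseteq> cball 0 ((K + A \<theta>0 - \<theta>0 \<bullet> \<omega>) / \<delta>)"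
    proof safe
      fix \<theta> assume "\<theta> \<in> D" "A \<theta> - \<theta> \<bullet> \<omega> \<le> A \<theta>0 - \<theta>0 \<bullet> \<omega>"
      with growth(2)[OF this(1)] have "\<delta> * norm \<theta> \<le> K + A \<theta>0 - \<theta>0 \<bullet> \<omega>"
        by (simp add: inner_commute[of \<omega>])
      then show "\<theta> \<in> cball 0 ((K + A \<theta>0 - \<theta>0 \<bullet> \<omega>) / \<delta>)" using growth(1) by (simp add: field_simps)
    qed
    then show "bounded {\<theta> \<in> D. A \<theta> - \<theta> \<bullet> \<omega> \<le> A \<theta>0 - \<theta>0 \<bullet> \<omega>}"
      by (rule bounded_subset[OF bounded_cball])
  qed
qed

(* The minimiser theta0 of A theta - theta . omega is interior: approaching it along a segment
   from an interior point, minimality keeps the means bounded, so mean_limit applies. *)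
lemma exists_interior_mean:
  assumes "\<omega> \<in> interior Dstar"
  obtains \<theta> where "\<theta> \<in> interior D" "has_mean \<nu> \<Gamma> \<theta> \<omega>"
proof -
  obtain \<theta>0 where \<theta>0: "\<theta>0 \<in> D" and min: "\<And>\<theta>. \<theta> \<in> D \<Longrightarrow> A \<theta>0 - \<theta>0 \<bullet> \<omega> \<le> A \<theta> - \<theta> \<bullet> \<omega>"
    using logpart_tilt_attains_min[OF assms] by blast
  obtain \<theta>1 where \<theta>1: "\<theta>1 \<in> interior D" using interior_domA_nonempty by blast
  obtain t where t: "\<And>n. 0 < t n" "\<And>n. t n < 1"
    and approach: "\<And>n. \<theta>0 + t n *\<^sub>R (\<theta>1 - \<theta>0) \<in> interior D" "(\<lambda>n. \<theta>0 + t n *\<^sub>R (\<theta>1 - \<theta>0)) \<longlonglongrightarrow> \<theta>0"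
    using convex_interior_approach[OF convex_domA \<theta>1 \<theta>0] by blast
  define \<theta>s where "\<theta>s n = \<theta>0 + t n *\<^sub>R (\<theta>1 - \<theta>0)" for n
  have \<theta>s: "\<And>n. \<theta>s n \<in> interior D" "\<theta>s \<longlonglongrightarrow> \<theta>0"
    using approach by (simp_all add: \<theta>s_def[abs_def])
  define \<omega>s where "\<omega>s n = (\<integral>x. q (\<theta>s n) x *\<^sub>R \<Gamma> x \<partial>\<nu>)" for n
  have mean: "has_mean \<nu> \<Gamma> (\<theta>s n) (\<omega>s n)" for n
    unfolding \<omega>s_def using \<theta>s(1) by (rule interior_has_mean)
  have "- \<bar>(\<theta>1 - \<theta>0) \<bullet> \<omega>\<bar> \<le> (\<theta>1 - \<theta>s n) \<bullet> \<omega>s n" for n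
  proof -
    have "A (\<theta>s n) + (\<theta>0 - \<theta>s n) \<bullet> \<omega>s n \<le> A \<theta>0" by (rule mean_subgradient[OF mean \<theta>0])
    moreover have "A \<theta>0 - \<theta>0 \<bullet> \<omega> \<le> A (\<theta>s n) - \<theta>s n \<bullet> \<omega>"
      using \<theta>s(1) interior_subset by (intro min) auto
    ultimately have "t n * ((\<theta>1 - \<theta>0) \<bullet> \<omega>) \<le> t n * ((\<theta>1 - \<theta>0) \<bullet> \<omega>s n)"
      by (simp add: \<theta>s_def algebra_simps)
    then have "- \<bar>(\<theta>1 - \<theta>0) \<bullet> \<omega>\<bar> \<le> (1 - t n) * ((\<theta>1 - \<theta>0) \<bullet> \<omega>s n)"
      by (rule neg_abs_le_one_minus_mult[OF t(1,2)])
    moreover have "\<theta>1 - \<theta>s n = (1 - t n) *\<^sub>R (\<theta>1 - \<theta>0)" by (simp add: \<theta>s_def algebra_simps)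
    ultimately show ?thesis by simp
  qed
  then have "bounded (range \<omega>s)"
    using convergent_imp_bounded[OF \<theta>s(2)] by (intro means_bounded[OF \<theta>1 mean] bdd_belowI2) auto
  then obtain r \<theta> where r: "strict_mono r" "(\<theta>s \<circ> r) \<longlonglongrightarrow> \<theta>" "\<theta> \<in> interior D"
    using mean_pairs_convergent_subseq[OF \<theta>s(1) mean convergent_imp_bounded[OF \<theta>s(2)]] by blast
  moreover have "(\<theta>s \<circ> r) \<longlonglongrightarrow> \<theta>0" using LIMSEQ_subseq_LIMSEQ[OF \<theta>s(2) r(1)] .
  ultimately have "\<theta>0 \<in> interior D" using LIMSEQ_unique by blast
  moreover have "has_mean \<nu> \<Gamma> \<theta>0 \<omega>"
    using min by (intro has_mean_of_subgradient[OF \<open>\<theta>0 \<in> interior D\<close>]) (simp add: algebra_simps)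
  ultimately show thesis by (rule that)
qed

lemma bregman_logpart:
  assumes "\<theta> \<in> interior D" "has_mean \<nu> \<Gamma> \<theta> \<omega>"
  shows "bregman A y \<theta> = A y - A \<theta> - (y - \<theta>) \<bullet> \<omega>"
  using gradient_eqI[OF has_derivative_logpart[OF assms]] by (simp add: bregman_def inner_commute)

lemma bregman_logpart_pos_on_sphere:
  assumes \<theta>: "\<theta> \<in> interior D" and mean: "has_mean \<nu> \<Gamma> \<theta> \<omega>"
    and r: "r > 0" "sphere \<theta> r \<subseteq> D"
  obtains c where "c > 0" "\<And>y. y \<in> sphere \<theta> r \<Longrightarrow> c \<le> bregman A y \<theta>"
proof -
  let ?B = "\<lambda>y. A y - A \<theta> - (y - \<theta>) \<bullet> \<omega>"
  obtain y0 where y0: "y0 \<in> sphere \<theta> r"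
    using r(1) by (metis all_not_in_conv less_le_not_le sphere_eq_empty)
  have "\<exists>p\<in>sphere \<theta> r. \<forall>y\<in>sphere \<theta> r. ?B p \<le> ?B y"
  proof (rule closed_sublevels_attains_min[OF y0 _ bounded_subset[OF bounded_sphere]])
    have "{y \<in> sphere \<theta> r. ?B y \<le> c} = sphere \<theta> r \<inter> {y \<in> D. A y - y \<bullet> \<omega> \<le> c + (A \<theta> - \<theta> \<bullet> \<omega>)}" for c
      using r(2) by (auto simp: algebra_simps)
    then show "closed {y \<in> sphere \<theta> r. ?B y \<le> c}" for c
      using closed_Int[OF closed_sphere closed_logpart_tilt_sublevel] by metis
  qed blast
  then obtain p where p: "p \<in> sphere \<theta> r" "\<And>y. y \<in> sphere \<theta> r \<Longrightarrow> ?B p \<le> ?B y" by blast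
  have "?B p \<noteq> 0"
  proof
    assume "?B p = 0"
    then have "p = \<theta>" using r(2) p(1) by (intro mean_subgradient_tight_imp_eq[OF mean]) auto
    then show False using p(1) r(1) by simp
  qed
  moreover have "0 \<le> ?B p" using mean_subgradient[OF mean] p(1) r(2) by force
  ultimately show thesis using that[of "?B p"] p(2) bregman_logpart[OF \<theta> mean] by auto
qed

(* Convexity of A along rays from theta turns the positive minimum on a small sphere into linear
   growth. *)
lemma bregman_logpart_linear_growth:
  assumes \<theta>: "\<theta> \<in> interior D" and mean: "has_mean \<nu> \<Gamma> \<theta> \<omega>"
  obtains c K where "c > 0" "\<And>y. y \<in> D \<Longrightarrow> c * norm (y - \<theta>) - K \<le> bregman A y \<theta>"
proof -
  obtain e where e: "e > 0" "ball \<theta> e \<subseteq> D" using \<theta> by (meson mem_interior)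
  define r where "r = e / 2"
  have r: "r > 0" using e by (simp add: r_def)
  have sphere: "sphere \<theta> r \<subseteq> interior D"
    using interior_maximal[OF e(2) open_ball] e(1) by (auto simp: r_def)
  obtain c0 where c0: "c0 > 0" "\<And>y. y \<in> sphere \<theta> r \<Longrightarrow> c0 \<le> bregman A y \<theta>"
    using bregman_logpart_pos_on_sphere[OF \<theta> mean r] sphere interior_subset by blast
  have "c0 / r * norm (y - \<theta>) - c0 \<le> bregman A y \<theta>" if y: "y \<in> D" for y
  proof (cases "norm (y - \<theta>) < r")
    case True
    then have "c0 / r * norm (y - \<theta>) \<le> c0" using c0(1) r by (simp add: field_simps)
    moreover have "0 \<le> bregman A y \<theta>"
      using mean_subgradient[OF mean y] by (simp add: bregman_logpart[OF \<theta> mean])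
    ultimately show ?thesis by linarith
  next
    case False
    define l where "l = r / norm (y - \<theta>)"
    have "r \<le> norm (y - \<theta>)" using False by simp
    moreover have n: "0 < norm (y - \<theta>)" using \<open>r \<le> norm (y - \<theta>)\<close> r by linarith
    ultimately have l: "0 < l" "l \<le> 1" using r by (auto simp: l_def divide_le_eq_1)
    define z where "z = (1 - l) *\<^sub>R \<theta> + l *\<^sub>R y"
    have "z - \<theta> = l *\<^sub>R (y - \<theta>)" by (simp add: z_def algebra_simps)
    then have "norm (z - \<theta>) = r" using l(1) n r by (simp add: l_def)
    then have z: "z \<in> sphere \<theta> r" by (simp add: dist_norm norm_minus_commute)
    have "A z \<le> (1 - l) * A \<theta> + l * A y"
      unfolding z_def using \<theta> y l z sphere interior_subset
      by (intro logpart_convex_combination) (auto simp: z_def)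
    then have "bregman A z \<theta> \<le> l * bregman A y \<theta>"
      by (simp add: bregman_logpart[OF \<theta> mean] z_def algebra_simps)
    then have "c0 \<le> l * bregman A y \<theta>" using c0(2)[OF z] by linarith
    then have "c0 * norm (y - \<theta>) \<le> r * bregman A y \<theta>" using n by (simp add: l_def field_simps)
    moreover have "0 \<le> c0 * r" using c0(1) r by simp
    ultimately have "c0 * norm (y - \<theta>) \<le> c0 * r + r * bregman A y \<theta>" by linarith
    then show ?thesis using r by (simp add: field_simps)
  qed
  then show thesis using that[of "c0 / r" c0] c0(1) r by simp
qed

lemma mean_in_interior_domAstar:
  assumes \<theta>: "\<theta> \<in> interior D" and mean: "has_mean \<nu> \<Gamma> \<theta> \<omega>"
  shows "\<omega> \<in> interior Dstar"
proof -
  obtain c K where c: "c > 0" and growth: "\<And>y. y \<in> D \<Longrightarrow> c * norm (y - \<theta>) - K \<le> bregman A y \<theta>"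
    using bregman_logpart_linear_growth[OF assms] by blast
  have "ball \<omega> c \<subseteq> Dstar"
  proof
    fix \<omega>' assume "\<omega>' \<in> ball \<omega> c"
    then have close: "norm (\<omega>' - \<omega>) < c" by (simp add: dist_norm norm_minus_commute)
    have "y \<bullet> \<omega>' - A y \<le> K - A \<theta> + \<theta> \<bullet> \<omega>'" if y: "y \<in> D" for y
    proof -
      have "(y - \<theta>) \<bullet> (\<omega>' - \<omega>) \<le> norm (y - \<theta>) * c"
        using norm_cauchy_schwarz[of "y - \<theta>" "\<omega>' - \<omega>"]
          mult_left_mono[OF less_imp_le[OF close] norm_ge_zero[of "y - \<theta>"]] by linarith
      then show ?thesis using growth[OF y] unfolding bregman_logpart[OF \<theta> mean]
        by (simp add: algebra_simps)
    qed
    then show "\<omega>' \<in> Dstar" by (rule conjA_leI)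
  qed
  then show ?thesis using c by (meson centre_in_ball interior_maximal open_ball subsetD)
qed

(* The inverse of the mean map grad A, which is grad A^* by gradient_conjA. *)
definition natpar :: "'h \<Rightarrow> 'h" where
  "natpar \<omega> = (SOME \<theta>. \<theta> \<in> interior D \<and> has_mean \<nu> \<Gamma> \<theta> \<omega>)"

lemma natpar:
  assumes "\<omega> \<in> interior Dstar"
  shows "natpar \<omega> \<in> interior D" "has_mean \<nu> \<Gamma> (natpar \<omega>) \<omega>"
proof -
  obtain \<theta> where "\<theta> \<in> interior D \<and> has_mean \<nu> \<Gamma> \<theta> \<omega>" using exists_interior_mean[OF assms] by blast
  then show "natpar \<omega> \<in> interior D" "has_mean \<nu> \<Gamma> (natpar \<omega>) \<omega>"
    unfolding natpar_def by (metis (mono_tags, lifting) someI)+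
qed

lemma natpar_eqI: "has_mean \<nu> \<Gamma> \<theta> \<omega> \<Longrightarrow> \<omega> \<in> interior Dstar \<Longrightarrow> natpar \<omega> = \<theta>"
  using has_mean_param_unique natpar(2) by blast

lemma conjA_natpar: "\<omega> \<in> interior Dstar \<Longrightarrow> Astar \<omega> = natpar \<omega> \<bullet> \<omega> - A (natpar \<omega>)"
  using conjA_at_mean(2)[OF natpar(2)] .

lemma fenchel_young_eq_natpar:
  assumes "\<omega> \<in> interior Dstar" "\<theta> \<in> D" "Astar \<omega> \<le> \<theta> \<bullet> \<omega> - A \<theta>"
  shows "\<theta> = natpar \<omega>"
  using assms conjA_natpar[OF assms(1)]
  by (intro mean_subgradient_tight_imp_eq[OF natpar(2)[OF assms(1)] assms(2)]) (simp add: algebra_simps)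

lemma natpar_locally_bounded:
  assumes "\<omega> \<in> interior Dstar"
  obtains r B where "r > 0" "cball \<omega> r \<subseteq> interior Dstar" "\<And>\<omega>'. \<omega>' \<in> cball \<omega> r \<Longrightarrow> norm (natpar \<omega>') \<le> B"
proof -
  obtain \<delta> K where growth: "\<delta> > 0" "\<And>\<theta>. \<theta> \<in> D \<Longrightarrow> \<delta> * norm \<theta> \<le> K + A \<theta> - \<omega> \<bullet> \<theta>"
    using fenchel_young_linear_growth[of Dstar D Astar A \<omega>, OF fenchel_young_conj]
      interior_subset assms by blast
  obtain e where e: "e > 0" "cball \<omega> e \<subseteq> interior Dstar"
    using assms open_interior open_contains_cball by blast
  obtain \<theta>1 where \<theta>1: "\<theta>1 \<in> D" using domA_nonempty by blast
  define r where "r = min e (\<delta> / 2)"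
  define B where "B = 2 * (K + norm \<theta>1 * (norm \<omega> + r) + A \<theta>1) / \<delta>"
  have "norm (natpar \<omega>') \<le> B" if \<omega>': "\<omega>' \<in> cball \<omega> r" for \<omega>'
  proof -
    let ?\<theta> = "natpar \<omega>'"
    have int: "\<omega>' \<in> interior Dstar" using \<omega>' e(2) by (auto simp: r_def)
    have dist: "norm (\<omega>' - \<omega>) \<le> r" "r \<le> \<delta> / 2" using \<omega>' by (auto simp: r_def dist_norm norm_minus_commute)
    have "- (norm \<theta>1 * (norm \<omega> + r)) - A \<theta>1 \<le> Astar \<omega>'"
    proof -
      have "norm \<omega>' \<le> norm \<omega> + r" using dist(1) norm_triangle_sub[of \<omega>' \<omega>] by simp
      then have "\<bar>\<theta>1 \<bullet> \<omega>'\<bar> \<le> norm \<theta>1 * (norm \<omega> + r)"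
        using Cauchy_Schwarz_ineq2[of \<theta>1 \<omega>'] mult_left_mono[of _ _ "norm \<theta>1"] by force
      then have "- (norm \<theta>1 * (norm \<omega> + r)) \<le> \<theta>1 \<bullet> \<omega>'" by linarith
      then show ?thesis using fenchel_young[OF _ \<theta>1, of \<omega>'] int interior_subset by force
    qed
    moreover have "?\<theta> \<bullet> (\<omega>' - \<omega>) \<le> norm ?\<theta> * (\<delta> / 2)"
      using norm_cauchy_schwarz[of ?\<theta> "\<omega>' - \<omega>"] mult_left_mono[OF _ norm_ge_zero[of ?\<theta>]] dist
      by (meson order_trans)
    moreover have "\<delta> * norm ?\<theta> \<le> K + A ?\<theta> - \<omega> \<bullet> ?\<theta>"
      using growth(2) natpar(1)[OF int] interior_subset by blast
    ultimately have "\<delta> / 2 * norm ?\<theta> \<le> K + norm \<theta>1 * (norm \<omega> + r) + A \<theta>1"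
      using conjA_natpar[OF int] by (simp add: inner_commute algebra_simps)
    then show ?thesis using growth(1) by (simp add: B_def field_simps)
  qed
  moreover have "cball \<omega> r \<subseteq> interior Dstar" by (rule order_trans[OF _ e(2)]) (auto simp: r_def)
  ultimately show thesis using that[of r B] e(1) growth(1) by (auto simp: r_def)
qed

lemma isCont_natpar:
  assumes "\<omega> \<in> interior Dstar"
  shows "isCont natpar \<omega>"
proof -
  obtain r B where r: "r > 0" "cball \<omega> r \<subseteq> interior Dstar"
    and B: "\<And>\<omega>'. \<omega>' \<in> cball \<omega> r \<Longrightarrow> norm (natpar \<omega>') \<le> B"
    using natpar_locally_bounded[OF assms] by blast
  have "continuous_on (cball \<omega> r) natpar"
  proof (rule continuous_from_closed_graph[of "cball 0 B"])
    show "natpar \<in> cball \<omega> r \<rightarrow> cball 0 B" using B by auto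
    show "closed ((\<lambda>x. (x, natpar x)) ` cball \<omega> r)"
      unfolding closed_sequential_limits
    proof (intro allI impI, elim conjE)
      fix zs l assume graph: "\<forall>n. zs n \<in> (\<lambda>x. (x, natpar x)) ` cball \<omega> r" and "zs \<longlonglongrightarrow> l"
      define xs where "xs n = fst (zs n)" for n
      have zs: "zs n = (xs n, natpar (xs n))" "xs n \<in> cball \<omega> r" for n
      proof -
        obtain x where "x \<in> cball \<omega> r" "zs n = (x, natpar x)" using graph by blast
        then show "zs n = (xs n, natpar (xs n))" "xs n \<in> cball \<omega> r" by (simp_all add: xs_def)
      qed
      have lim: "xs \<longlonglongrightarrow> fst l" "(\<lambda>n. natpar (xs n)) \<longlonglongrightarrow> snd l"
        using tendsto_fst[OF \<open>zs \<longlonglongrightarrow> l\<close>] tendsto_snd[OF \<open>zs \<longlonglongrightarrow> l\<close>] by (simp_all add: zs(1))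
      have "fst l \<in> cball \<omega> r"
        using closed_cball[of \<omega> r] zs(2) lim(1) unfolding closed_sequential_limits by blast
      moreover have "has_mean \<nu> \<Gamma> (snd l) (fst l)"
        using zs(2) r(2) by (intro mean_limit(2)[OF natpar lim(2,1)]) auto
      ultimately show "l \<in> (\<lambda>x. (x, natpar x)) ` cball \<omega> r"
        using natpar_eqI r(2) by (auto intro!: image_eqI[of _ _ "fst l"] prod_eqI)
    qed
  qed simp
  then show ?thesis using r(1) by (intro continuous_on_interior) auto
qed

lemma has_derivative_conjA:
  assumes "\<omega> \<in> interior Dstar"
  shows "(Astar has_derivative (\<lambda>v. natpar \<omega> \<bullet> v)) (at \<omega>)"
proof (rule has_derivative_continuous_subgradient[OF open_interior assms isCont_natpar[OF assms]])
  fix y z assume yz: "y \<in> interior Dstar" "z \<in> interior Dstar"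
  then show "Astar y + natpar y \<bullet> (z - y) \<le> Astar z"
    using fenchel_young[of z "natpar y"] natpar(1)[of y] conjA_natpar[of y] interior_subset
    by (force simp: algebra_simps)
qed

lemma gradient_conjA: "\<omega> \<in> interior Dstar \<Longrightarrow> gradient Astar \<omega> = natpar \<omega>"
  by (rule gradient_eqI[OF has_derivative_conjA])

lemma conjA_midpoint_less:
  assumes \<omega>: "\<omega> \<in> interior Dstar" "\<omega>' \<in> interior Dstar" "\<omega> \<noteq> \<omega>'"
  shows "Astar (midpoint \<omega> \<omega>') < (Astar \<omega> + Astar \<omega>') / 2"
proof -
  let ?m = "midpoint \<omega> \<omega>'"
  have m: "?m \<in> interior Dstar"
    using midpoint_in_convex[OF convex_interior[OF convex_domAstar] \<omega>(1,2)] .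
  let ?\<theta> = "natpar ?m"
  have \<theta>: "?\<theta> \<in> D" using natpar(1)[OF m] interior_subset by blast
  have "?\<theta> \<noteq> natpar \<omega>"
  proof
    assume "?\<theta> = natpar \<omega>"
    then have "?m = \<omega>" using natpar(2)[OF m] natpar(2)[OF \<omega>(1)] by (simp add: has_mean_def)
    then show False using \<omega>(3) by simp
  qed
  then have "?\<theta> \<bullet> \<omega> - A ?\<theta> < Astar \<omega>"
    using fenchel_young[of \<omega> ?\<theta>] fenchel_young_eq_natpar[OF \<omega>(1) \<theta>] \<omega>(1) \<theta> interior_subset
    by force
  moreover have "?\<theta> \<bullet> \<omega>' - A ?\<theta> \<le> Astar \<omega>'"
    using fenchel_young[of \<omega>' ?\<theta>] \<omega>(2) \<theta> interior_subset by force
  moreover have "Astar ?m = ((?\<theta> \<bullet> \<omega> - A ?\<theta>) + (?\<theta> \<bullet> \<omega>' - A ?\<theta>)) / 2"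
    using conjA_natpar[OF m] by (simp add: midpoint_def inner_add_right field_simps)
  ultimately show ?thesis by simp
qed

section \<open>Minimising the tilted conjugate\<close>

(* With b = L^T theta_pi this is f^D_pi up to the constant A_pi(theta_pi), see fD_at_mean. *)
abbreviation tilted_conjA :: "'h \<Rightarrow> 'h \<Rightarrow> real" where
  "tilted_conjA b \<omega> \<equiv> Astar \<omega> - b \<bullet> \<omega>"

lemma closed_tilted_conjA_sublevel: "closed {\<omega> \<in> Dstar. tilted_conjA b \<omega> \<le> c}"
  unfolding closed_sequential_limits
proof (intro allI impI, elim conjE)
  fix \<omega>s \<omega> assume in_set: "\<forall>n. \<omega>s n \<in> {\<omega> \<in> Dstar. tilted_conjA b \<omega> \<le> c}" and "\<omega>s \<longlonglongrightarrow> \<omega>"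
  have "\<theta> \<bullet> \<omega> - A \<theta> \<le> c + b \<bullet> \<omega>" if "\<theta> \<in> D" for \<theta>
  proof (rule LIMSEQ_le)
    show "(\<lambda>n. \<theta> \<bullet> \<omega>s n - A \<theta>) \<longlonglongrightarrow> \<theta> \<bullet> \<omega> - A \<theta>"
      using \<open>\<omega>s \<longlonglongrightarrow> \<omega>\<close> by (intro tendsto_intros)
    show "(\<lambda>n. c + b \<bullet> \<omega>s n) \<longlonglongrightarrow> c + b \<bullet> \<omega>"
      using \<open>\<omega>s \<longlonglongrightarrow> \<omega>\<close> by (intro tendsto_intros)
    have "\<theta> \<bullet> \<omega>s n - A \<theta> \<le> c + b \<bullet> \<omega>s n" for n
    proof -
      have "\<omega>s n \<in> Dstar" "tilted_conjA b (\<omega>s n) \<le> c" using in_set by auto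
      with fenchel_young[OF this(1) that] show ?thesis by linarith
    qed
    then show "\<exists>N. \<forall>n\<ge>N. \<theta> \<bullet> \<omega>s n - A \<theta> \<le> c + b \<bullet> \<omega>s n" by blast
  qed
  then show "\<omega> \<in> {\<omega> \<in> Dstar. tilted_conjA b \<omega> \<le> c}"
    using conjA_leI[of \<omega> "c + b \<bullet> \<omega>"] by (simp add: algebra_simps)
qed

lemma bounded_tilted_conjA_sublevel:
  assumes "b \<in> interior D"
  shows "bounded {\<omega> \<in> Dstar. tilted_conjA b \<omega> \<le> c}"
proof -
  obtain \<delta> K where growth: "\<delta> > 0" "\<And>\<omega>. \<omega> \<in> Dstar \<Longrightarrow> \<delta> * norm \<omega> \<le> K + Astar \<omega> - b \<bullet> \<omega>"
    using fenchel_young_linear_growth[of D Dstar A Astar b, OF fenchel_young[rotated] assms] by blast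
  have "{\<omega> \<in> Dstar. tilted_conjA b \<omega> \<le> c} \<subseteq> cball 0 ((K + c) / \<delta>)"
  proof safe
    fix \<omega> assume "\<omega> \<in> Dstar" "tilted_conjA b \<omega> \<le> c"
    with growth(2)[OF this(1)] have "\<delta> * norm \<omega> \<le> K + c" by linarith
    then show "\<omega> \<in> cball 0 ((K + c) / \<delta>)" using growth(1) by (simp add: field_simps)
  qed
  then show ?thesis by (rule bounded_subset[OF bounded_cball])
qed

lemma bregman_conjA_at_mean:
  assumes "b \<in> interior D" "has_mean \<nu> \<Gamma> b m"
  shows "bregman Astar \<omega> m = tilted_conjA b \<omega> - tilted_conjA b m"
proof -
  have m: "m \<in> interior Dstar" by (rule mean_in_interior_domAstar[OF assms])
  have "gradient Astar m = b" using gradient_conjA[OF m] natpar_eqI[OF assms(2) m] by simp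
  then show ?thesis by (simp add: bregman_def inner_diff_right)
qed

lemma tilted_conjA_attains_min:
  assumes "closed C" "\<omega>0 \<in> C \<inter> Dstar" and bounded: "\<And>c. bounded {\<omega> \<in> C \<inter> Dstar. tilted_conjA b \<omega> \<le> c}"
  shows "\<exists>\<omega>\<in>C \<inter> Dstar. \<forall>\<omega>'\<in>C \<inter> Dstar. tilted_conjA b \<omega> \<le> tilted_conjA b \<omega>'"
proof (rule closed_sublevels_attains_min[OF assms(2) _ bounded])
  fix c
  have "{\<omega> \<in> C \<inter> Dstar. tilted_conjA b \<omega> \<le> c} = C \<inter> {\<omega> \<in> Dstar. tilted_conjA b \<omega> \<le> c}" by auto
  then show "closed {\<omega> \<in> C \<inter> Dstar. tilted_conjA b \<omega> \<le> c}"
    using closed_Int[OF assms(1) closed_tilted_conjA_sublevel] by simp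
qed

(* Dual to exists_interior_mean, with the roles of parameters and means exchanged. *)
lemma tilted_conjA_min_interior:
  assumes C: "convex C" and \<omega>1: "\<omega>1 \<in> C \<inter> Dstar"
    and min: "\<And>\<omega>. \<omega> \<in> C \<inter> Dstar \<Longrightarrow> tilted_conjA b \<omega>1 \<le> tilted_conjA b \<omega>"
    and \<omega>2: "\<omega>2 \<in> C \<inter> interior Dstar"
  shows "\<omega>1 \<in> interior Dstar"
proof -
  obtain t where t: "\<And>n. 0 < t n" "\<And>n. t n < 1"
    and approach: "\<And>n. \<omega>1 + t n *\<^sub>R (\<omega>2 - \<omega>1) \<in> interior Dstar" "(\<lambda>n. \<omega>1 + t n *\<^sub>R (\<omega>2 - \<omega>1)) \<longlonglongrightarrow> \<omega>1"
    using convex_interior_approach[OF convex_domAstar, of \<omega>2 \<omega>1] \<omega>1 \<omega>2 by blast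
  define \<omega>s where "\<omega>s n = \<omega>1 + t n *\<^sub>R (\<omega>2 - \<omega>1)" for n
  have \<omega>s: "\<And>n. \<omega>s n \<in> interior Dstar" "\<omega>s \<longlonglongrightarrow> \<omega>1"
    using approach by (simp_all add: \<omega>s_def[abs_def])
  have \<omega>s_C: "\<omega>s n \<in> C" for n
    using convexD[OF C, of \<omega>1 \<omega>2 "1 - t n" "t n"] \<omega>1 \<omega>2 t(2)[of n] t(1)[of n]
    by (simp add: \<omega>s_def algebra_simps)
  define \<theta>s where "\<theta>s n = natpar (\<omega>s n)" for n
  have \<theta>s: "\<theta>s n \<in> interior D" "has_mean \<nu> \<Gamma> (\<theta>s n) (\<omega>s n)" for n
    using natpar[OF \<omega>s(1)] by (simp_all add: \<theta>s_def)
  have "- \<bar>b \<bullet> (\<omega>2 - \<omega>1)\<bar> \<le> (\<omega>2 - \<omega>s n) \<bullet> \<theta>s n" for n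
  proof -
    have "tilted_conjA b \<omega>1 \<le> tilted_conjA b (\<omega>s n)" using min \<omega>s_C \<omega>s(1) interior_subset by blast
    moreover have "\<theta>s n \<bullet> \<omega>1 \<le> A (\<theta>s n) + Astar \<omega>1"
      using fenchel_young \<omega>1 \<theta>s(1) interior_subset by blast
    moreover have "Astar (\<omega>s n) = \<theta>s n \<bullet> \<omega>s n - A (\<theta>s n)"
      using conjA_natpar[OF \<omega>s(1)] by (simp add: \<theta>s_def)
    ultimately have "t n * (b \<bullet> (\<omega>2 - \<omega>1)) \<le> t n * (\<theta>s n \<bullet> (\<omega>2 - \<omega>1))"
      by (simp add: \<omega>s_def algebra_simps)
    then have "- \<bar>b \<bullet> (\<omega>2 - \<omega>1)\<bar> \<le> (1 - t n) * (\<theta>s n \<bullet> (\<omega>2 - \<omega>1))"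
      by (rule neg_abs_le_one_minus_mult[OF t(1,2)])
    moreover have "\<omega>2 - \<omega>s n = (1 - t n) *\<^sub>R (\<omega>2 - \<omega>1)" by (simp add: \<omega>s_def algebra_simps)
    ultimately show ?thesis by (simp add: inner_commute)
  qed
  then have "bounded (range \<theta>s)"
    using convergent_imp_bounded[OF \<omega>s(2)] \<omega>2 by (intro params_bounded[OF _ \<theta>s(2)] bdd_belowI2) auto
  then obtain r \<theta> \<omega> where r: "strict_mono r" "(\<omega>s \<circ> r) \<longlonglongrightarrow> \<omega>" "\<theta> \<in> interior D" "has_mean \<nu> \<Gamma> \<theta> \<omega>"
    using mean_pairs_convergent_subseq[OF \<theta>s _ convergent_imp_bounded[OF \<omega>s(2)]] by metis
  moreover have "(\<omega>s \<circ> r) \<longlonglongrightarrow> \<omega>1" using LIMSEQ_subseq_LIMSEQ[OF \<omega>s(2) r(1)] .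
  ultimately show ?thesis using LIMSEQ_unique mean_in_interior_domAstar by blast
qed

lemma tilted_conjA_min_unique:
  assumes C: "convex C" and \<omega>: "\<omega> \<in> C \<inter> interior Dstar" "\<omega>' \<in> C \<inter> interior Dstar"
    and min: "\<And>x. x \<in> C \<inter> Dstar \<Longrightarrow> tilted_conjA b \<omega> \<le> tilted_conjA b x"
      "\<And>x. x \<in> C \<inter> Dstar \<Longrightarrow> tilted_conjA b \<omega>' \<le> tilted_conjA b x"
  shows "\<omega> = \<omega>'"
proof (rule ccontr)
  assume "\<omega> \<noteq> \<omega>'"
  let ?m = "midpoint \<omega> \<omega>'"
  have "?m \<in> C \<inter> Dstar"
    using midpoint_in_convex[OF C] midpoint_in_convex[OF convex_domAstar] \<omega> interior_subset by blast
  then have "tilted_conjA b \<omega> \<le> tilted_conjA b ?m" "tilted_conjA b \<omega>' \<le> tilted_conjA b ?m"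
    using min by blast+
  moreover have "Astar ?m < (Astar \<omega> + Astar \<omega>') / 2"
    using conjA_midpoint_less \<omega> \<open>\<omega> \<noteq> \<omega>'\<close> by blast
  moreover have "b \<bullet> ?m = (b \<bullet> \<omega> + b \<bullet> \<omega>') / 2" by (simp add: midpoint_def inner_add_right)
  ultimately show False by argo
qed

lemma tilted_conjA_unique_min:
  assumes "closed C" "convex C" "C \<inter> interior Dstar \<noteq> {}"
    and bounded: "\<And>c. bounded {\<omega> \<in> C \<inter> Dstar. tilted_conjA b \<omega> \<le> c}"
  obtains \<omega> where "\<omega> \<in> C \<inter> interior Dstar" "\<And>\<omega>'. \<omega>' \<in> C \<inter> Dstar \<Longrightarrow> tilted_conjA b \<omega> \<le> tilted_conjA b \<omega>'"
    "\<And>\<omega>'. \<omega>' \<in> C \<inter> Dstar \<Longrightarrow> tilted_conjA b \<omega>' \<le> tilted_conjA b \<omega> \<Longrightarrow> \<omega>' = \<omega>"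
proof -
  obtain \<omega>2 where \<omega>2: "\<omega>2 \<in> C \<inter> interior Dstar" using assms(3) by blast
  obtain \<omega> where \<omega>: "\<omega> \<in> C \<inter> Dstar" and min: "\<And>\<omega>'. \<omega>' \<in> C \<inter> Dstar \<Longrightarrow> tilted_conjA b \<omega> \<le> tilted_conjA b \<omega>'"
    using tilted_conjA_attains_min[OF assms(1) _ bounded] \<omega>2 interior_subset by blast
  have int: "\<omega> \<in> interior Dstar" using tilted_conjA_min_interior[OF assms(2) \<omega> min \<omega>2] .
  have "\<omega>' = \<omega>" if \<omega>': "\<omega>' \<in> C \<inter> Dstar" "tilted_conjA b \<omega>' \<le> tilted_conjA b \<omega>" for \<omega>'
  proof -
    have min': "tilted_conjA b \<omega>' \<le> tilted_conjA b x" if "x \<in> C \<inter> Dstar" for x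
      using min[OF that] \<omega>'(2) by linarith
    have "\<omega>' \<in> interior Dstar" using tilted_conjA_min_interior[OF assms(2) \<omega>'(1) min' \<omega>2] .
    then show ?thesis using tilted_conjA_min_unique[OF assms(2) _ _ min' min] \<omega>' \<omega> int by blast
  qed
  then show thesis using that \<omega> int min by blast
qed

section \<open>The objective f^D\<close>

lemma fD_at_mean:
  fixes \<Gamma>\<pi> :: "'x \<Rightarrow> 'k::euclidean_space" and L :: "'h \<Rightarrow> 'k"
  assumes lerc: "LERC \<nu> \<Gamma> \<Gamma>\<pi> \<theta>\<pi> L" and mean: "has_mean \<nu> \<Gamma> \<theta> \<omega>"
  shows "fD \<nu> \<Gamma> (expdens \<nu> \<Gamma>\<pi> \<theta>\<pi>) \<omega> = ereal (tilted_conjA (adjoint L \<theta>\<pi>) \<omega> + logpart \<nu> \<Gamma>\<pi> \<theta>\<pi>)"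
proof -
  define \<theta>' where "\<theta>' = (SOME \<theta>. has_mean \<nu> \<Gamma> \<theta> \<omega>)"
  have mean': "has_mean \<nu> \<Gamma> \<theta>' \<omega>" unfolding \<theta>'_def using mean by (rule someI)
  have \<theta>': "\<theta>' \<in> D" "integrable \<nu> (\<lambda>x. q \<theta>' x *\<^sub>R \<Gamma> x)" "(\<integral>x. q \<theta>' x *\<^sub>R \<Gamma> x \<partial>\<nu>) = \<omega>"
    using mean' by (auto simp: has_mean_def)
  have \<pi>: "linear L" "integrable \<nu> (\<lambda>x. q \<theta>' x *\<^sub>R \<Gamma>\<pi> x)" "(\<integral>x. q \<theta>' x *\<^sub>R \<Gamma>\<pi> x \<partial>\<nu>) = L \<omega>"
    using lerc mean' by (auto simp: LERC_def)
  let ?A\<pi> = "logpart \<nu> \<Gamma>\<pi> \<theta>\<pi>"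
  have integrand: "q \<theta>' x * ln (q \<theta>' x / expdens \<nu> \<Gamma>\<pi> \<theta>\<pi> x)
      = \<theta>' \<bullet> (q \<theta>' x *\<^sub>R \<Gamma> x) - \<theta>\<pi> \<bullet> (q \<theta>' x *\<^sub>R \<Gamma>\<pi> x) + (?A\<pi> - A \<theta>') * q \<theta>' x" for x
  proof -
    have "q \<theta>' x / expdens \<nu> \<Gamma>\<pi> \<theta>\<pi> x = exp ((\<theta>' \<bullet> \<Gamma> x - A \<theta>') - (\<theta>\<pi> \<bullet> \<Gamma>\<pi> x - ?A\<pi>))"
      by (simp add: expdens_def exp_diff)
    then show ?thesis by (simp add: algebra_simps)
  qed
  have ints: "integrable \<nu> (\<lambda>x. \<theta>' \<bullet> (q \<theta>' x *\<^sub>R \<Gamma> x))" "integrable \<nu> (\<lambda>x. \<theta>\<pi> \<bullet> (q \<theta>' x *\<^sub>R \<Gamma>\<pi> x))"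
    "integrable \<nu> (\<lambda>x. (?A\<pi> - A \<theta>') * q \<theta>' x)"
    using integrable_inner_right[OF \<theta>'(2)] integrable_inner_right[OF \<pi>(2)] integrable_expdens[OF \<theta>'(1)]
    by auto
  have "(\<integral>x. q \<theta>' x * (\<theta>' \<bullet> \<Gamma> x) \<partial>\<nu>) = \<theta>' \<bullet> \<omega>" "(\<integral>x. q \<theta>' x * (\<theta>\<pi> \<bullet> \<Gamma>\<pi> x) \<partial>\<nu>) = \<theta>\<pi> \<bullet> L \<omega>"
    using integral_inner_right[OF \<theta>'(2), of \<theta>'] integral_inner_right[OF \<pi>(2), of \<theta>\<pi>] \<theta>'(3) \<pi>(3)
    by simp_all
  then have "(\<integral>x. q \<theta>' x * ln (q \<theta>' x / expdens \<nu> \<Gamma>\<pi> \<theta>\<pi> x) \<partial>\<nu>) = \<theta>' \<bullet> \<omega> - \<theta>\<pi> \<bullet> L \<omega> + (?A\<pi> - A \<theta>')"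
    unfolding integrand using ints integral_expdens[OF \<theta>'(1)]
    by simp
  moreover have "\<theta>\<pi> \<bullet> L \<omega> = adjoint L \<theta>\<pi> \<bullet> \<omega>"
    using adjoint_works[OF \<pi>(1), of \<omega> \<theta>\<pi>] by (simp add: inner_commute)
  moreover have "Astar \<omega> = \<theta>' \<bullet> \<omega> - A \<theta>'" by (rule conjA_at_mean(2)[OF mean'])
  moreover have "integrable \<nu> (\<lambda>x. q \<theta>' x * ln (q \<theta>' x / expdens \<nu> \<Gamma>\<pi> \<theta>\<pi> x))"
    unfolding integrand using ints by auto
  ultimately show ?thesis using mean
    by (auto simp: fD_def KL_def qmean_def \<theta>'_def[symmetric] algebra_simps)
qed

lemma fD_unique_minimizer:
  fixes \<Gamma>\<pi> :: "'x \<Rightarrow> 'k::euclidean_space" and L :: "'h \<Rightarrow> 'k"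
  assumes lerc: "LERC \<nu> \<Gamma> \<Gamma>\<pi> \<theta>\<pi> L" and C: "closed C" "convex C" "C \<inter> interior Dstar \<noteq> {}"
    and bounded: "\<And>c. bounded {\<omega> \<in> C \<inter> Dstar. tilted_conjA (adjoint L \<theta>\<pi>) \<omega> \<le> c}"
  obtains \<omega> where "unique_minimizer (fD \<nu> \<Gamma> (expdens \<nu> \<Gamma>\<pi> \<theta>\<pi>)) (C \<inter> Dstar) \<omega>" "\<omega> \<in> C \<inter> interior Dstar"
    "\<And>\<omega>'. \<omega>' \<in> C \<inter> Dstar \<Longrightarrow> tilted_conjA (adjoint L \<theta>\<pi>) \<omega> \<le> tilted_conjA (adjoint L \<theta>\<pi>) \<omega>'"
    "\<And>\<omega>'. \<omega>' \<in> C \<inter> Dstar \<Longrightarrow> tilted_conjA (adjoint L \<theta>\<pi>) \<omega>' \<le> tilted_conjA (adjoint L \<theta>\<pi>) \<omega> \<Longrightarrow> \<omega>' = \<omega>"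
proof -
  let ?b = "adjoint L \<theta>\<pi>" and ?f = "fD \<nu> \<Gamma> (expdens \<nu> \<Gamma>\<pi> \<theta>\<pi>)" and ?c = "logpart \<nu> \<Gamma>\<pi> \<theta>\<pi>"
  obtain \<omega> where \<omega>: "\<omega> \<in> C \<inter> interior Dstar"
    and min: "\<And>\<omega>'. \<omega>' \<in> C \<inter> Dstar \<Longrightarrow> tilted_conjA ?b \<omega> \<le> tilted_conjA ?b \<omega>'"
    and uniq: "\<And>\<omega>'. \<omega>' \<in> C \<inter> Dstar \<Longrightarrow> tilted_conjA ?b \<omega>' \<le> tilted_conjA ?b \<omega> \<Longrightarrow> \<omega>' = \<omega>"
    using tilted_conjA_unique_min[OF C bounded] by blast
  have f_mean: "?f \<omega>' = ereal (tilted_conjA ?b \<omega>' + ?c)" if "has_mean \<nu> \<Gamma> \<theta> \<omega>'" for \<theta> \<omega>'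
    using fD_at_mean[OF lerc that] .
  have f_inf: "?f \<omega>' = \<infinity>" if "\<nexists>\<theta>. has_mean \<nu> \<Gamma> \<theta> \<omega>'" for \<omega>'
    using that by (simp add: fD_def)
  have f\<omega>: "?f \<omega> = ereal (tilted_conjA ?b \<omega> + ?c)" using f_mean natpar(2) \<omega> by blast
  have "unique_minimizer ?f (C \<inter> Dstar) \<omega>"
    unfolding unique_minimizer_def
  proof (intro conjI ballI impI)
    show "\<omega> \<in> C \<inter> Dstar" using \<omega> interior_subset by blast
  next
    fix \<omega>' assume \<omega>': "\<omega>' \<in> C \<inter> Dstar"
    show "?f \<omega> \<le> ?f \<omega>'"
    proof (cases "\<exists>\<theta>. has_mean \<nu> \<Gamma> \<theta> \<omega>'")
      case True
      then show ?thesis using f\<omega> f_mean min[OF \<omega>'] by auto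
    qed (use f_inf in simp)
  next
    fix \<omega>' assume \<omega>': "\<omega>' \<in> C \<inter> Dstar" and "\<forall>\<omega>''\<in>C \<inter> Dstar. ?f \<omega>' \<le> ?f \<omega>''"
    then have le: "?f \<omega>' \<le> ?f \<omega>" using \<omega> interior_subset by blast
    then obtain \<theta> where "has_mean \<nu> \<Gamma> \<theta> \<omega>'" using f\<omega> f_inf by force
    then have "tilted_conjA ?b \<omega>' \<le> tilted_conjA ?b \<omega>" using le f\<omega> f_mean by auto
    then show "\<omega>' = \<omega>" using uniq \<omega>' by blast
  qed
  then show thesis using that \<omega> min uniq by blast
qed

lemma fD_unique_minimizer_compact:
  fixes \<Gamma>\<pi> :: "'x \<Rightarrow> 'k::euclidean_space" and L :: "'h \<Rightarrow> 'k"
  assumes "LERC \<nu> \<Gamma> \<Gamma>\<pi> \<theta>\<pi> L" "closed C" "convex C" "C \<inter> interior Dstar \<noteq> {}" "compact C"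
  shows "\<exists>\<omega>. unique_minimizer (fD \<nu> \<Gamma> (expdens \<nu> \<Gamma>\<pi> \<theta>\<pi>)) (C \<inter> Dstar) \<omega> \<and> \<omega> \<in> C \<inter> interior Dstar"
proof (rule fD_unique_minimizer[OF assms(1-4)])
  show "bounded {\<omega> \<in> C \<inter> Dstar. tilted_conjA (adjoint L \<theta>\<pi>) \<omega> \<le> c}" for c
    by (rule bounded_subset[OF compact_imp_bounded[OF assms(5)]]) blast
qed blast

lemma fD_unique_minimizer_bregman_projection:
  fixes \<Gamma>\<pi> :: "'x \<Rightarrow> 'k::euclidean_space" and L :: "'h \<Rightarrow> 'k"
  assumes lerc: "LERC \<nu> \<Gamma> \<Gamma>\<pi> \<theta>\<pi> L" and C: "closed C" "convex C" "C \<inter> interior Dstar \<noteq> {}"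
    and b: "adjoint L \<theta>\<pi> \<in> interior D"
  shows "\<exists>\<omega>. unique_minimizer (fD \<nu> \<Gamma> (expdens \<nu> \<Gamma>\<pi> \<theta>\<pi>)) (C \<inter> Dstar) \<omega> \<and> \<omega> \<in> C \<inter> interior Dstar \<and>
    \<omega> = proj_Astar \<nu> \<Gamma> C (gradient A (adjoint L \<theta>\<pi>))"
proof -
  let ?b = "adjoint L \<theta>\<pi>"
  have "bounded {\<omega> \<in> C \<inter> Dstar. tilted_conjA ?b \<omega> \<le> c}" for c
    using bounded_tilted_conjA_sublevel[OF b] by (rule bounded_subset) blast
  then obtain \<omega> where \<omega>: "unique_minimizer (fD \<nu> \<Gamma> (expdens \<nu> \<Gamma>\<pi> \<theta>\<pi>)) (C \<inter> Dstar) \<omega>" "\<omega> \<in> C \<inter> interior Dstar"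
    and min: "\<And>\<omega>'. \<omega>' \<in> C \<inter> Dstar \<Longrightarrow> tilted_conjA ?b \<omega> \<le> tilted_conjA ?b \<omega>'"
    and uniq: "\<And>\<omega>'. \<omega>' \<in> C \<inter> Dstar \<Longrightarrow> tilted_conjA ?b \<omega>' \<le> tilted_conjA ?b \<omega> \<Longrightarrow> \<omega>' = \<omega>"
    using fD_unique_minimizer[OF lerc C] by blast
  define m where "m = (\<integral>x. q ?b x *\<^sub>R \<Gamma> x \<partial>\<nu>)"
  have mean: "has_mean \<nu> \<Gamma> ?b m" unfolding m_def using b by (rule interior_has_mean)
  have "proj_Astar \<nu> \<Gamma> C m = \<omega>"
    unfolding proj_Astar_def bregman_conjA_at_mean[OF b mean]
  proof (rule the_equality)
    show "\<omega> \<in> C \<inter> Dstar \<and> (\<forall>\<omega>''\<in>C \<inter> Dstar.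
        tilted_conjA ?b \<omega> - tilted_conjA ?b m \<le> tilted_conjA ?b \<omega>'' - tilted_conjA ?b m)"
      using \<omega>(2) min interior_subset by auto
  next
    fix \<omega>' assume "\<omega>' \<in> C \<inter> Dstar \<and> (\<forall>\<omega>''\<in>C \<inter> Dstar.
        tilted_conjA ?b \<omega>' - tilted_conjA ?b m \<le> tilted_conjA ?b \<omega>'' - tilted_conjA ?b m)"
    then show "\<omega>' = \<omega>" using uniq[of \<omega>'] \<omega>(2) interior_subset by auto
  qed
  moreover have "gradient A ?b = m" by (rule gradient_eqI[OF has_derivative_logpart[OF b mean]])
  ultimately show ?thesis using \<omega> by auto
qed

lemma has_derivative_fD_r:
  fixes \<Gamma>\<pi> :: "'x \<Rightarrow> 'k::euclidean_space" and L :: "'h \<Rightarrow> 'k"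
  assumes lerc: "LERC \<nu> \<Gamma> \<Gamma>\<pi> \<theta>\<pi> L" and \<omega>: "\<omega> \<in> interior Dstar"
  shows "(fD_r \<nu> \<Gamma> (expdens \<nu> \<Gamma>\<pi> \<theta>\<pi>) has_derivative (\<lambda>v. (natpar \<omega> - adjoint L \<theta>\<pi>) \<bullet> v)) (at \<omega>)"
proof -
  let ?b = "adjoint L \<theta>\<pi>" and ?c = "logpart \<nu> \<Gamma>\<pi> \<theta>\<pi>"
  have "((\<lambda>x. tilted_conjA ?b x + ?c) has_derivative (\<lambda>v. natpar \<omega> \<bullet> v - ?b \<bullet> v)) (at \<omega>)"
    by (intro has_derivative_add_const has_derivative_diff has_derivative_conjA[OF \<omega>]
        has_derivative_inner_right has_derivative_ident)
  then have "(fD_r \<nu> \<Gamma> (expdens \<nu> \<Gamma>\<pi> \<theta>\<pi>) has_derivative (\<lambda>v. natpar \<omega> \<bullet> v - ?b \<bullet> v)) (at \<omega>)"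
    by (rule has_derivative_transform_within_open[OF _ open_interior \<omega>])
      (simp add: fD_r_def fD_at_mean[OF lerc natpar(2)])
  then show ?thesis by (simp add: inner_diff_left)
qed

lemma bregman_fD_r_eq_bregman_conjA:
  fixes \<Gamma>\<pi> :: "'x \<Rightarrow> 'k::euclidean_space" and L :: "'h \<Rightarrow> 'k"
  assumes lerc: "LERC \<nu> \<Gamma> \<Gamma>\<pi> \<theta>\<pi> L" and \<omega>: "\<omega> \<in> interior Dstar" "\<omega>' \<in> interior Dstar"
  shows "bregman (fD_r \<nu> \<Gamma> (expdens \<nu> \<Gamma>\<pi> \<theta>\<pi>)) \<omega> \<omega>' = bregman Astar \<omega> \<omega>'"
  using gradient_eqI[OF has_derivative_fD_r[OF lerc \<omega>(2)]] gradient_conjA[OF \<omega>(2)]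
    fD_at_mean[OF lerc natpar(2)[OF \<omega>(1)]] fD_at_mean[OF lerc natpar(2)[OF \<omega>(2)]]
  by (simp add: bregman_def fD_r_def inner_diff_left inner_diff_right)

lemma fD_r_rel_strongly_convex_smooth:
  fixes \<Gamma>\<pi> :: "'x \<Rightarrow> 'k::euclidean_space" and L :: "'h \<Rightarrow> 'k"
  assumes lerc: "LERC \<nu> \<Gamma> \<Gamma>\<pi> \<theta>\<pi> L"
  shows "rel_strongly_convex 1 (fD_r \<nu> \<Gamma> (expdens \<nu> \<Gamma>\<pi> \<theta>\<pi>)) Astar (interior Dstar)"
    "rel_smooth 1 (fD_r \<nu> \<Gamma> (expdens \<nu> \<Gamma>\<pi> \<theta>\<pi>)) Astar (interior Dstar)"
  using has_derivative_fD_r[OF lerc] has_derivative_conjA bregman_fD_r_eq_bregman_conjA[OF lerc]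
  by (auto simp: rel_strongly_convex_def rel_smooth_def differentiable_def)

end

theorem proposition6:
  fixes \<nu> :: "'x measure" and \<Gamma> :: "'x \<Rightarrow> 'h::euclidean_space"
    and \<Gamma>\<pi> :: "'x \<Rightarrow> 'k::euclidean_space" and \<theta>\<pi> :: 'k and L :: "'h \<Rightarrow> 'k"
  assumes nontrivial: "emeasure \<nu> (space \<nu>) \<noteq> 0"
    and meas: "\<Gamma> \<in> borel_measurable \<nu>" "\<Gamma>\<pi> \<in> borel_measurable \<nu>"
    and lerc: "LERC \<nu> \<Gamma> \<Gamma>\<pi> \<theta>\<pi> L"
  shows
    "(\<forall>C :: 'h set. interior (domA \<nu> \<Gamma>) \<noteq> {} \<and> minimal \<nu> \<Gamma> \<and> steep \<nu> \<Gamma> \<and>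
        closed C \<and> convex C \<and> C \<inter> interior (domAstar \<nu> \<Gamma>) \<noteq> {} \<and> compact C \<longrightarrow>
       (\<exists>\<omega>s. unique_minimizer (fD \<nu> \<Gamma> (expdens \<nu> \<Gamma>\<pi> \<theta>\<pi>)) (C \<inter> domAstar \<nu> \<Gamma>) \<omega>s \<and>
              \<omega>s \<in> C \<inter> interior (domAstar \<nu> \<Gamma>))) \<and>
    (\<forall>C :: 'h set. interior (domA \<nu> \<Gamma>) \<noteq> {} \<and> minimal \<nu> \<Gamma> \<and> steep \<nu> \<Gamma> \<and>
        closed C \<and> convex C \<and> C \<inter> interior (domAstar \<nu> \<Gamma>) \<noteq> {} \<and>
        adjoint L \<theta>\<pi> \<in> interior (domA \<nu> \<Gamma>) \<longrightarrow>
       (\<exists>\<omega>s. unique_minimizer (fD \<nu> \<Gamma> (expdens \<nu> \<Gamma>\<pi> \<theta>\<pi>)) (C \<inter> domAstar \<nu> \<Gamma>) \<omega>s \<and>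
              \<omega>s \<in> C \<inter> interior (domAstar \<nu> \<Gamma>) \<and>
              \<omega>s = proj_Astar \<nu> \<Gamma> C (gradient (logpart \<nu> \<Gamma>) (adjoint L \<theta>\<pi>)))) \<and>
    (interior (domA \<nu> \<Gamma>) \<noteq> {} \<and> minimal \<nu> \<Gamma> \<and> steep \<nu> \<Gamma> \<longrightarrow>
       rel_strongly_convex 1 (fD_r \<nu> \<Gamma> (expdens \<nu> \<Gamma>\<pi> \<theta>\<pi>)) (conjA_r \<nu> \<Gamma>) (interior (domAstar \<nu> \<Gamma>)) \<and>
       rel_smooth 1 (fD_r \<nu> \<Gamma> (expdens \<nu> \<Gamma>\<pi> \<theta>\<pi>)) (conjA_r \<nu> \<Gamma>) (interior (domAstar \<nu> \<Gamma>)))"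
proof -
  have family: "steep_exp_family \<nu> \<Gamma>" if "interior (domA \<nu> \<Gamma>) \<noteq> {}" "minimal \<nu> \<Gamma>" "steep \<nu> \<Gamma>"
    using that nontrivial meas(1) by unfold_locales
  note compact_case = steep_exp_family.fD_unique_minimizer_compact[OF family lerc]
    and projection_case = steep_exp_family.fD_unique_minimizer_bregman_projection[OF family lerc]
    and bregman_case = steep_exp_family.fD_r_rel_strongly_convex_smooth[OF family lerc]
  show ?thesis
    by (intro conjI allI impI; elim conjE) (rule compact_case projection_case bregman_case; assumption)+
qed

end
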